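(* Let $A=\mathbb{F}_q[T]$ and $\boldsymbol\omega=(\omega_1,\omega_2,1)\in C_\infty^3$ such that $\omega_1,\omega_2,1$ are orthogonal (i.e. $|x_1\omega_1+x_2\omega_2+x_3|=\max(|x_1\omega_1|,|x_2\omega_2|,|x_3|)$ for all $x_1,x_2,x_3\in K_\infty$) and $|\omega_1|\ge|\omega_2|\ge1$, with $a:=\log\omega_1$ and $b:=\log\omega_2$ integers. Let $\Lambda=A\omega_1+A\omega_2+A$ and $\Delta(\boldsymbol\omega)=\Delta_T(\Lambda)$. Then: (1) if $a=b=0$: $\log\Delta(\boldsymbol\omega)=q^3$; (2) if $a>b=0$: $\log\Delta(\boldsymbol\omega)=q^{2a+3}-(q^3-1)q^2\frac{q^{2a}-1}{q^2-1}$; (3) if $a=b>0$: $\log\Delta(\boldsymbol\omega)=q^3-(q^a-1)(q^2+q)$.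
   Context: $\mathbb{F}_q$ is a finite field with $q$ elements; $K=\mathbb{F}_q(T)$, $A=\mathbb{F}_q[T]$, $K_\infty=\mathbb{F}_q((1/T))$, $C_\infty$ the completion of an algebraic closure of $K_\infty$, with absolute value normalized by $|T|=q$; $\log x=\log_q|x|$. For a rank-$3$ $A$-lattice $\Lambda\subset C_\infty$ (finitely generated discrete $A$-submodule), $e^\Lambda(z)=z\prod_{0\neq\lambda\in\Lambda}(1-z/\lambda)$, and $\Delta_T(\Lambda)$ is the coefficient of $X^{q^3}$ in the unique polynomial $\phi^\Lambda_T(X)=TX+\ell_1X^q+\ell_2X^{q^2}+\ell_3X^{q^3}$ with $e^\Lambda(Tz)=\phi^\Lambda_T(e^\Lambda(z))$. *)

theory Defs
  imports "HOL-Computational_Algebra.Polynomial"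
begin

text \<open>An abstract model of C_infinity: a field 'k with a non-archimedean absolute value,
complete and algebraically closed, containing a finite subfield Fq with q elements and an
element T with absolute value q.\<close>

definition nonarch_abs :: "('k::field \<Rightarrow> real) \<Rightarrow> bool" where
  "nonarch_abs v \<longleftrightarrow> (\<forall>x. v x \<ge> 0) \<and> (\<forall>x. v x = 0 \<longleftrightarrow> x = 0)
     \<and> (\<forall>x y. v (x * y) = v x * v y) \<and> (\<forall>x y. v (x + y) \<le> max (v x) (v y))"

definition tends_abs :: "('k::field \<Rightarrow> real) \<Rightarrow> (nat \<Rightarrow> 'k) \<Rightarrow> 'k \<Rightarrow> bool" where
  "tends_abs v X L \<longleftrightarrow> (\<forall>e>0. \<exists>N. \<forall>n\<ge>N. v (X n - L) < e)"

definition complete_abs :: "('k::field \<Rightarrow> real) \<Rightarrow> bool" where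
  "complete_abs v \<longleftrightarrow> (\<forall>X::nat \<Rightarrow> 'k.
     (\<forall>e>0. \<exists>N. \<forall>m\<ge>N. \<forall>n\<ge>N. v (X m - X n) < e) \<longrightarrow> (\<exists>L. tends_abs v X L))"

definition alg_closed :: "'k::field itself \<Rightarrow> bool" where
  "alg_closed _ \<longleftrightarrow> (\<forall>p :: 'k poly. degree p > 0 \<longrightarrow> (\<exists>x. poly p x = 0))"

definition is_subfield :: "'k::field set \<Rightarrow> bool" where
  "is_subfield F \<longleftrightarrow> 0 \<in> F \<and> 1 \<in> F \<and> (\<forall>x\<in>F. \<forall>y\<in>F. x + y \<in> F \<and> x * y \<in> F)
     \<and> (\<forall>x\<in>F. - x \<in> F \<and> inverse x \<in> F)"

definition A_ring :: "'k::field set \<Rightarrow> 'k \<Rightarrow> 'k set" where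
  "A_ring Fq T = {poly p T | p. \<forall>i. coeff p i \<in> Fq}"

definition K_field :: "'k::field set \<Rightarrow> 'k \<Rightarrow> 'k set" where
  "K_field Fq T = {x / y | x y. x \<in> A_ring Fq T \<and> y \<in> A_ring Fq T \<and> y \<noteq> 0}"

text \<open>K_infinity = completion of K, realised as the closure of K in 'k\<close>
definition Kinf :: "'k::field set \<Rightarrow> 'k \<Rightarrow> ('k \<Rightarrow> real) \<Rightarrow> 'k set" where
  "Kinf Fq T v = {x. \<forall>e>0. \<exists>y\<in>K_field Fq T. v (x - y) < e}"

definition Cinf_model :: "'k::field set \<Rightarrow> nat \<Rightarrow> 'k \<Rightarrow> ('k \<Rightarrow> real) \<Rightarrow> bool" where
  "Cinf_model Fq q T v \<longleftrightarrow> nonarch_abs v \<and> complete_abs v \<and> alg_closed TYPE('k)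
     \<and> is_subfield Fq \<and> finite Fq \<and> card Fq = q \<and> v T = real q"

definition logq :: "nat \<Rightarrow> ('k \<Rightarrow> real) \<Rightarrow> 'k \<Rightarrow> real" where
  "logq q v x = log (real q) (v x)"

definition lattice3 :: "'k::field set \<Rightarrow> 'k \<Rightarrow> 'k \<Rightarrow> 'k \<Rightarrow> 'k set" where
  "lattice3 Fq T w1 w2 = {a1 * w1 + a2 * w2 + a3 | a1 a2 a3.
     a1 \<in> A_ring Fq T \<and> a2 \<in> A_ring Fq T \<and> a3 \<in> A_ring Fq T}"

text \<open>Exponential e^L(z) = z * prod_{0 \<noteq> l \<in> L} (1 - z/l), the infinite product being the
limit of the partial products over the (finitely many) nonzero lattice points with |l| \<le> n.\<close>
definition expo :: "('k::field \<Rightarrow> real) \<Rightarrow> 'k set \<Rightarrow> 'k \<Rightarrow> 'k" where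
  "expo v L z = z * (THE P. tends_abs v
      (\<lambda>n. \<Prod>l\<in>{l\<in>L. l \<noteq> 0 \<and> v l \<le> real n}. (1 - z / l)) P)"

text \<open>Delta_T(L): the coefficient of X^(q^3) in phi_T^L(X) = T X + l1 X^q + l2 X^(q^2) + l3 X^(q^3)
with e^L(T z) = phi_T^L(e^L(z)).\<close>
definition DeltaT :: "nat \<Rightarrow> 'k::field \<Rightarrow> ('k \<Rightarrow> real) \<Rightarrow> 'k set \<Rightarrow> 'k" where
  "DeltaT q T v L = (THE l3. \<exists>l1 l2. \<forall>z.
      expo v L (T * z) = T * expo v L z + l1 * expo v L z ^ q + l2 * expo v L z ^ (q^2)
                         + l3 * expo v L z ^ (q^3))"

definition orthogonal3 :: "'k::field set \<Rightarrow> 'k \<Rightarrow> ('k \<Rightarrow> real) \<Rightarrow> 'k \<Rightarrow> 'k \<Rightarrow> 'k \<Rightarrow> bool" where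
  "orthogonal3 Fq T v u1 u2 u3 \<longleftrightarrow> (\<forall>x1\<in>Kinf Fq T v. \<forall>x2\<in>Kinf Fq T v. \<forall>x3\<in>Kinf Fq T v.
     v (x1 * u1 + x2 * u2 + x3 * u3) = max (v (x1 * u1)) (max (v (x2 * u2)) (v (x3 * u3))))"

end

theory Submission
  imports Defs
begin

text \<open>
Write e for the exponential of the lattice L and, for a finite Fq-subspace W, e_W(x) =
x * prod (1 - x/w) over the nonzero w in W.  Each e_W is an additive Fq-linear polynomial, and
for a direct sum V = U + W one has e_V = e_W * prod (1 - e_W / e_W(u)) over the nonzero u in U.
Applied to the balls of T^-1 L = U + L, where U is a set of representatives of T^-1 L / L,
orthogonality of the basis yields, in the limit, e(T z) = T e(z) prod (1 - e(z)/e(u)).  Building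
e(U) by three steps W |-> W + Fq y shows that the right-hand side is a q-polynomial in e(z) of
degree q^3 with leading coefficient T prod (-1/e(u)), so log Delta = 1 - sum log |e(u)|.  Finally
|e(u)| = |u| prod |u|/|l| over the lattice points with |l| < |u|, and the three cases come down to
counting lattice points of each size.
\<close>

section \<open>Exponentials of finite additive subgroups\<close>

lemma poly_eq_0_of_many_roots:
  fixes p :: "'a::field poly"
  assumes "finite S" "degree p < card S" "\<forall>x\<in>S. poly p x = 0"
  shows "p = 0"
proof (rule ccontr)
  assume "p \<noteq> 0"
  hence "card {x. poly p x = 0} \<le> degree p" by (rule card_poly_roots_bound)
  moreover have "card S \<le> card {x. poly p x = 0}"
    using assms \<open>p \<noteq> 0\<close> by (intro card_mono poly_roots_finite) auto
  ultimately show False using assms(2) by linarith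
qed

lemma poly_eq_of_agree_on_many:
  fixes p r :: "'a::field poly"
  assumes "finite S" "n \<le> card S" "n \<ge> 1" "degree p \<le> n" "degree r \<le> n"
    "coeff p n = coeff r n" "\<forall>x\<in>S. poly p x = poly r x"
  shows "p = r"
proof -
  have "degree (p - r) < n"
  proof (rule degree_lessI)
    show "p - r \<noteq> 0 \<or> 0 < n" using assms by auto
    show "\<forall>k\<ge>n. coeff (p - r) k = 0"
      using assms(4-6) by (auto simp: le_less coeff_eq_0)
  qed
  hence "p - r = 0" using assms by (intro poly_eq_0_of_many_roots[OF assms(1)]) auto
  thus ?thesis by simp
qed

lemma prod_linear_degree_coeff:
  fixes a :: "'b \<Rightarrow> 'a::field"
  assumes "finite W"
  shows "degree (\<Prod>w\<in>W. [:a w, 1:]) = card W" "coeff (\<Prod>w\<in>W. [:a w, 1:]) (card W) = 1"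
proof -
  show d: "degree (\<Prod>w\<in>W. [:a w, 1:]) = card W"
    by (subst degree_prod_eq_sum_degree) auto
  have "lead_coeff (\<Prod>w\<in>W. [:a w, 1:]) = 1" by (simp add: lead_coeff_prod)
  thus "coeff (\<Prod>w\<in>W. [:a w, 1:]) (card W) = 1" using d by simp
qed

definition finite_add_subgroup :: "'a::field set \<Rightarrow> bool" where
  "finite_add_subgroup W \<longleftrightarrow> finite W \<and> 0 \<in> W \<and> (\<forall>x\<in>W. \<forall>y\<in>W. x + y \<in> W) \<and> (\<forall>x\<in>W. - x \<in> W)"

definition root_prod :: "'a::field set \<Rightarrow> 'a \<Rightarrow> 'a" where
  "root_prod W x = (\<Prod>w\<in>W. (x - w))"

lemma root_prod_eq_0: "finite W \<Longrightarrow> x \<in> W \<Longrightarrow> root_prod W x = 0"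
  unfolding root_prod_def by (rule prod_zero) auto

lemma root_prod_translate:
  assumes "finite_add_subgroup W" "x \<in> W"
  shows "root_prod W (x + y) = root_prod W y"
proof -
  have cl: "w - x \<in> W" "w + x \<in> W" if "w \<in> W" for w
    using assms that unfolding finite_add_subgroup_def by (metis diff_conv_add_uminus)+
  have bij: "bij_betw (\<lambda>w. w - x) W W"
    by (rule bij_betw_byWitness[where f'="\<lambda>w. w + x"]) (use cl in auto)
  have "root_prod W (x + y) = (\<Prod>w\<in>W. (y - (w - x)))" unfolding root_prod_def
    by (rule prod.cong) (auto simp: algebra_simps)
  also have "\<dots> = root_prod W y" unfolding root_prod_def
    using prod.reindex_bij_betw[OF bij, of "\<lambda>w. y - w"] by simp
  finally show ?thesis .
qed

text \<open>Both sides of the additivity identity are monic of degree \<open>|W|\<close> in \<open>x\<close>, and their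
difference vanishes on \<open>W\<close> by translation invariance.\<close>

lemma root_prod_add:
  assumes W: "finite_add_subgroup W"
  shows "root_prod W (x + y) = root_prod W x + root_prod W y"
proof -
  have fin: "finite W" and W0: "0 \<in> W" using W by (auto simp: finite_add_subgroup_def)
  define n where "n = card W"
  have n1: "n \<ge> 1" using fin W0 card_gt_0_iff[of W] unfolding n_def by auto
  define p where "p = (\<Prod>w\<in>W. [:y - w, 1:])"
  define r where "r = (\<Prod>w\<in>W. [:- w, 1:]) + [:root_prod W y:]"
  have pp: "poly p x = root_prod W (x + y)" for x
    unfolding p_def root_prod_def poly_prod by (intro prod.cong refl) (simp add: algebra_simps)
  have pr: "poly r x = root_prod W x + root_prod W y" for x
    by (simp add: r_def root_prod_def poly_prod)
  have dp: "degree p = n" "coeff p n = 1"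
    using prod_linear_degree_coeff[OF fin] unfolding p_def n_def by auto
  have dr: "degree r \<le> n" "coeff r n = 1"
    using prod_linear_degree_coeff[OF fin, of uminus] n1
    by (auto simp: r_def n_def degree_add_le coeff_pCons split: nat.split)
  have "p = r"
  proof (rule poly_eq_of_agree_on_many[OF fin _ n1])
    show "\<forall>x\<in>W. poly p x = poly r x"
      using root_prod_translate[OF W] root_prod_eq_0[OF fin] by (simp add: pp pr)
  qed (use dp dr in \<open>auto simp: n_def\<close>)
  thus ?thesis using pp pr by metis
qed

lemma root_prod_eq_prod_add:
  assumes W: "finite_add_subgroup W"
  shows "root_prod W t = (\<Prod>w\<in>W. (t + w))"
proof -
  have bij: "bij_betw uminus W W"
    by (rule bij_betw_byWitness[where f'=uminus]) (use W in \<open>auto simp: finite_add_subgroup_def\<close>)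
  show ?thesis unfolding root_prod_def
    using prod.reindex_bij_betw[OF bij, of "\<lambda>w. t - w"] by simp
qed

definition fin_exp :: "'a::field set \<Rightarrow> 'a \<Rightarrow> 'a" where
  "fin_exp W x = x * (\<Prod>w\<in>W-{0}. (1 - x / w))"

lemma fin_exp_0 [simp]: "fin_exp W 0 = 0" by (simp add: fin_exp_def)

lemma root_prod_eq_fin_exp:
  assumes "finite W" "0 \<in> W"
  shows "root_prod W x = (\<Prod>w\<in>W-{0}. - w) * fin_exp W x"
proof -
  have "root_prod W x = (x - 0) * (\<Prod>w\<in>W-{0}. (x - w))"
    unfolding root_prod_def using assms by (simp add: prod.remove)
  also have "(\<Prod>w\<in>W-{0}. (x - w)) = (\<Prod>w\<in>W-{0}. (- w) * (1 - x / w))"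
    by (intro prod.cong refl) (auto simp: field_simps)
  also have "\<dots> = (\<Prod>w\<in>W-{0}. - w) * (\<Prod>w\<in>W-{0}. (1 - x / w))"
    by (rule prod.distrib)
  finally show ?thesis unfolding fin_exp_def by simp
qed

lemma fin_exp_add:
  assumes W: "finite_add_subgroup W"
  shows "fin_exp W (x + y) = fin_exp W x + fin_exp W y"
proof -
  have fin: "finite W" "0 \<in> W" using W by (auto simp: finite_add_subgroup_def)
  have "(\<Prod>w\<in>W-{0}. - w) \<noteq> 0" using fin by (auto simp: prod_zero_iff)
  moreover have "fin_exp W (x + y) * (\<Prod>w\<in>W-{0}. - w) = (fin_exp W x + fin_exp W y) * (\<Prod>w\<in>W-{0}. - w)"
    using root_prod_add[OF W, of x y] root_prod_eq_fin_exp[OF fin] by (simp add: algebra_simps)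
  ultimately show ?thesis by simp
qed

lemma fin_exp_uminus: "finite_add_subgroup W \<Longrightarrow> fin_exp W (- x) = - fin_exp W x"
  using fin_exp_add[of W x "-x"] by (simp add: add_eq_0_iff)

lemma fin_exp_diff: "finite_add_subgroup W \<Longrightarrow> fin_exp W (x - y) = fin_exp W x - fin_exp W y"
  using fin_exp_add[of W x "-y"] fin_exp_uminus[of W y] by simp

lemma fin_exp_eq_0_iff:
  assumes "finite W" "0 \<in> W"
  shows "fin_exp W x = 0 \<longleftrightarrow> x \<in> W"
  using assms by (cases "x = 0") (auto simp: fin_exp_def prod_zero_iff)

lemma prod_translate_eq_fin_exp:
  assumes W: "finite_add_subgroup W" and u: "u \<notin> W"
  shows "(\<Prod>w\<in>W. (1 - z / (u + w))) = 1 - fin_exp W z / fin_exp W u"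
proof -
  have fin: "finite W" "0 \<in> W" using W by (auto simp: finite_add_subgroup_def)
  have nz: "u + w \<noteq> 0" if "w \<in> W" for w
    using u W that by (auto simp: finite_add_subgroup_def add_eq_0_iff)
  have Pu: "fin_exp W u \<noteq> 0" using fin_exp_eq_0_iff[OF fin] u by simp
  have "(\<Prod>w\<in>W. (1 - z / (u + w))) = (\<Prod>w\<in>W. ((u - z) + w)) / (\<Prod>w\<in>W. (u + w))"
    unfolding prod_dividef[symmetric] by (intro prod.cong refl) (use nz in \<open>auto simp: field_simps\<close>)
  also have "\<dots> = root_prod W (u - z) / root_prod W u" using root_prod_eq_prod_add[OF W] by simp
  also have "\<dots> = fin_exp W (u - z) / fin_exp W u"
    using root_prod_eq_fin_exp[OF fin] fin by (simp add: prod_zero_iff)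
  also have "\<dots> = 1 - fin_exp W z / fin_exp W u" using fin_exp_diff[OF W] Pu by (simp add: field_simps)
  finally show ?thesis .
qed

lemma fin_exp_direct_sum:
  assumes W: "finite_add_subgroup W" and U: "finite U" "0 \<in> U"
    and inj: "inj_on (\<lambda>(u,w). u + w) (U \<times> W)"
    and V: "V = (\<lambda>(u,w). u + w) ` (U \<times> W)"
  shows "fin_exp V z = fin_exp W z * (\<Prod>u\<in>U-{0}. (1 - fin_exp W z / fin_exp W u))"
proof -
  have fin: "finite W" "0 \<in> W" using W by (auto simp: finite_add_subgroup_def)
  define f where "f x = 1 - z / x" for x
  have zero: "u + w = 0 \<longleftrightarrow> u = 0 \<and> w = 0" if "u \<in> U" "w \<in> W" for u w
    using inj_onD[OF inj, of "(u,w)" "(0,0)"] that U fin by auto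
  have notW: "u \<notin> W" if "u \<in> U" "u \<noteq> 0" for u
    using inj_onD[OF inj, of "(u,0)" "(0,u)"] that U fin by auto
  have Vm: "V - {0} = (\<lambda>(u,w). u + w) ` (U \<times> W - {(0,0)})"
    using zero unfolding V by auto
  have "(\<Prod>x\<in>V-{0}. f x) = (\<Prod>(u,w)\<in>U \<times> W - {(0,0)}. f (u + w))"
    unfolding Vm by (rule prod.reindex_cong[OF inj_on_subset[OF inj]]) auto
  also have "U \<times> W - {(0,0)} = ({0} \<times> (W - {0})) \<union> ((U - {0}) \<times> W)" using U by auto
  also have "(\<Prod>(u,w)\<in>({0} \<times> (W - {0})) \<union> ((U - {0}) \<times> W). f (u + w))
      = (\<Prod>(u,w)\<in>{0} \<times> (W - {0}). f (u + w)) * (\<Prod>(u,w)\<in>(U - {0}) \<times> W. f (u + w))"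
    by (rule prod.union_disjoint) (use U fin in auto)
  also have "(\<Prod>(u,w)\<in>{0} \<times> (W - {0}). f (u + w)) = (\<Prod>w\<in>W-{0}. f w)"
    by (subst prod.cartesian_product[symmetric]) simp
  also have "(\<Prod>(u,w)\<in>(U - {0}) \<times> W. f (u + w)) = (\<Prod>u\<in>U-{0}. \<Prod>w\<in>W. f (u + w))"
    by (subst prod.cartesian_product[symmetric]) simp
  also have "\<dots> = (\<Prod>u\<in>U-{0}. (1 - fin_exp W z / fin_exp W u))"
    by (intro prod.cong refl) (use notW prod_translate_eq_fin_exp[OF W] in \<open>auto simp: f_def\<close>)
  finally show ?thesis unfolding fin_exp_def f_def by (simp add: mult.assoc)
qed

section \<open>Finite subfields and \<open>q\<close>-polynomials\<close>

lemma card_subfield_ge_2: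
  assumes "is_subfield F" "finite F"
  shows "card F \<ge> 2"
proof -
  have "{0, 1} \<subseteq> F" using assms by (auto simp: is_subfield_def)
  hence "card {0::'a,1} \<le> card F" using assms by (intro card_mono) auto
  thus ?thesis by simp
qed

lemma subfield_power_card_minus_1:
  assumes F: "is_subfield F" "finite F" and c: "c \<in> F" "c \<noteq> 0"
  shows "c ^ (card F - 1) = 1"
proof -
  have cl: "x * y \<in> F" "inverse x \<in> F" if "x \<in> F" "y \<in> F" for x y
    using F that by (auto simp: is_subfield_def)
  have bij: "bij_betw (\<lambda>x. c * x) (F - {0}) (F - {0})"
    by (rule bij_betw_byWitness[where f'="\<lambda>x. inverse c * x"]) (use c cl in auto)
  have "(\<Prod>x\<in>F-{0}. c * x) = (\<Prod>x\<in>F-{0}. x)"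
    using prod.reindex_bij_betw[OF bij, of "\<lambda>x. x"] by simp
  moreover have "(\<Prod>x\<in>F-{0}. c * x) = c ^ card (F - {0}) * (\<Prod>x\<in>F-{0}. x)"
    by (simp add: prod.distrib)
  moreover have "(\<Prod>x\<in>F-{0}. x) \<noteq> 0" using F by (auto simp: prod_zero_iff)
  moreover have "card (F - {0}) = card F - 1" using F c by (simp add: is_subfield_def)
  ultimately show ?thesis by simp
qed

lemma prod_subfield_units_X_minus:
  assumes F: "is_subfield F" "finite F"
  shows "(\<Prod>c\<in>F-{0}. (Z - c)) = Z ^ (card F - 1) - 1"
proof -
  define n where "n = card F - 1"
  have n1: "n \<ge> 1" using card_subfield_ge_2[OF F] by (simp add: n_def)
  have cn: "card (F - {0}) = n" using F by (simp add: is_subfield_def n_def)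
  define p where "p = (\<Prod>c\<in>F-{0}. [:- c, 1:])"
  define r where "r = (monom 1 n - 1 :: 'a poly)"
  have dp: "degree p = n" "coeff p n = 1" using prod_linear_degree_coeff[of "F - {0}" uminus] F cn
    by (auto simp: p_def)
  have dr: "degree r \<le> n" "coeff r n = 1" using n1 unfolding r_def
    by (auto intro!: degree_diff_le simp: degree_monom_le)
  have "p = r"
  proof (rule poly_eq_of_agree_on_many[of "F - {0}" n])
    show "\<forall>x\<in>F - {0}. poly p x = poly r x"
      using subfield_power_card_minus_1[OF F]
      by (auto simp: p_def r_def poly_prod poly_monom n_def prod_zero_iff F)
  qed (use F cn n1 dp dr in auto)
  hence "poly p Z = poly r Z" by simp
  thus ?thesis by (simp add: p_def r_def poly_prod poly_monom n_def)
qed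

lemma prod_subfield_units_one_minus:
  assumes F: "is_subfield F" "finite F"
  shows "(\<Prod>c\<in>F-{0}. (1 - Z / c)) = 1 - Z ^ (card F - 1)"
proof -
  have "(\<Prod>c\<in>F-{0}. (1 - Z / c)) = (\<Prod>c\<in>F-{0}. (Z - c)) / (\<Prod>c\<in>F-{0}. (0 - c))"
    unfolding prod_dividef[symmetric] by (intro prod.cong refl) (auto simp: field_simps)
  also have "\<dots> = (Z ^ (card F - 1) - 1) / (0 ^ (card F - 1) - 1)"
    by (simp only: prod_subfield_units_X_minus[OF F])
  also have "0 ^ (card F - 1) = (0::'a)" using card_subfield_ge_2[OF F] by simp
  finally show ?thesis by (simp add: field_simps)
qed

lemma subfield_finite_add_subgroup: "is_subfield F \<Longrightarrow> finite F \<Longrightarrow> finite_add_subgroup F"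
  by (auto simp: is_subfield_def finite_add_subgroup_def)

lemma subfield_frobenius_add:
  fixes F :: "'a::field set" and x y :: 'a
  assumes F: "is_subfield F" "finite F"
  shows "(x + y) ^ card F = x ^ card F + y ^ card F"
proof -
  have "root_prod F Z = Z ^ card F - Z" for Z
  proof -
    have "root_prod F Z = (Z - 0) * (\<Prod>c\<in>F-{0}. (Z - c))"
      unfolding root_prod_def using F prod.remove[OF F(2), of 0 "\<lambda>c. Z - c"]
      by (simp add: is_subfield_def)
    also have "\<dots> = Z * (Z ^ (card F - 1) - 1)" using prod_subfield_units_X_minus[OF F] by simp
    also have "\<dots> = Z ^ card F - Z"
      using card_subfield_ge_2[OF F] by (simp add: algebra_simps power_eq_if)
    finally show ?thesis .
  qed
  thus ?thesis using root_prod_add[OF subfield_finite_add_subgroup[OF F], of x y] by simp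
qed

lemma finite_add_subgroup_0: "finite_add_subgroup {0}"
  by (simp add: finite_add_subgroup_def)

definition scalar_closed :: "'a::field set \<Rightarrow> 'a set \<Rightarrow> bool" where
  "scalar_closed F W \<longleftrightarrow> (\<forall>c\<in>F. \<forall>w\<in>W. c * w \<in> W)"

lemma scalar_closed_0: "scalar_closed F {0}"
  by (simp add: scalar_closed_def)

lemma fin_exp_scalar:
  assumes F: "is_subfield F" and W: "scalar_closed F W" and c: "c \<in> F"
  shows "fin_exp W (c * x) = c * fin_exp W x"
proof (cases "c = 0")
  case False
  have "inverse c \<in> F" using F c by (auto simp: is_subfield_def)
  hence bij: "bij_betw (\<lambda>w. c * w) (W - {0}) (W - {0})"
    by (intro bij_betw_byWitness[where f'="\<lambda>w. inverse c * w"])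
       (use W c False in \<open>auto simp: scalar_closed_def\<close>)
  have "(\<Prod>w\<in>W-{0}. (1 - c * x / w)) = (\<Prod>w\<in>W-{0}. (1 - c * x / (c * w)))"
    using prod.reindex_bij_betw[OF bij, of "\<lambda>w. 1 - c * x / w"] by simp
  also have "\<dots> = (\<Prod>w\<in>W-{0}. (1 - x / w))" using False by simp
  finally show ?thesis unfolding fin_exp_def by simp
qed simp

definition add_line :: "'a::field set \<Rightarrow> 'a set \<Rightarrow> 'a \<Rightarrow> 'a set" where
  "add_line F W y = (\<lambda>(u,w). u + w) ` ((\<lambda>c. c * y) ` F \<times> W)"

lemma add_line_iff: "u \<in> add_line F W y \<longleftrightarrow> (\<exists>c\<in>F. \<exists>w\<in>W. u = c * y + w)"
  unfolding add_line_def by auto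

lemma image_add_line:
  assumes "\<And>x y. f (x + y) = f x + f y" "\<And>c x. c \<in> F \<Longrightarrow> f (c * x) = c * f x"
  shows "f ` add_line F W y = add_line F (f ` W) (f y)"
  unfolding add_line_def using assms by (auto simp: image_iff) (metis (no_types) image_eqI)+

locale finite_subfield =
  fixes F :: "'a::field set"
  assumes subfield: "is_subfield F" and finite_F: "finite F"
begin

lemma zero_in_F: "0 \<in> F" and one_in_F: "1 \<in> F"
  and add_in_F: "x \<in> F \<Longrightarrow> y \<in> F \<Longrightarrow> x + y \<in> F"
  and mult_in_F: "x \<in> F \<Longrightarrow> y \<in> F \<Longrightarrow> x * y \<in> F"
  and uminus_in_F: "x \<in> F \<Longrightarrow> - x \<in> F" and inverse_in_F: "x \<in> F \<Longrightarrow> inverse x \<in> F"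
  using subfield by (auto simp: is_subfield_def)

lemma diff_in_F: "x \<in> F \<Longrightarrow> y \<in> F \<Longrightarrow> x - y \<in> F"
  using add_in_F uminus_in_F by (metis diff_conv_add_uminus)

lemma card_F_ge_2: "card F \<ge> 2" using card_subfield_ge_2[OF subfield finite_F] .

lemma add_line_sum_inj:
  assumes W: "finite_add_subgroup W" "scalar_closed F W" and y: "y \<notin> W"
  shows "inj_on (\<lambda>(u,w). u + w) ((\<lambda>c. c * y) ` F \<times> W)" and "inj_on (\<lambda>c. c * y) F"
proof -
  have Wd: "x - z \<in> W" if "x \<in> W" "z \<in> W" for x z
    using W that unfolding finite_add_subgroup_def by (metis diff_conv_add_uminus)
  have Ws: "c * x \<in> W" if "c \<in> F" "x \<in> W" for c x using W that by (auto simp: scalar_closed_def)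
  have "y \<noteq> 0" using y W by (auto simp: finite_add_subgroup_def)
  thus "inj_on (\<lambda>c. c * y) F" by (auto simp: inj_on_def)
  have key: "c = c' \<and> w = w'"
    if "c \<in> F" "c' \<in> F" "w \<in> W" "w' \<in> W" "c * y + w = c' * y + w'" for c c' w w'
  proof (cases "c = c'")
    case False
    have "(c - c') * y = w' - w" using that(5) by (simp add: algebra_simps)
    hence "y = inverse (c - c') * (w' - w)" using False by (simp add: field_simps)
    moreover have "inverse (c - c') * (w' - w) \<in> W"
      using Ws inverse_in_F diff_in_F Wd that by simp
    ultimately show ?thesis using y by simp
  qed (use that in simp)
  show "inj_on (\<lambda>(u,w). u + w) ((\<lambda>c. c * y) ` F \<times> W)"
    by (auto simp: inj_on_def dest: key)
qed

lemma add_line_subspace: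
  assumes W: "finite_add_subgroup W" "scalar_closed F W" and y: "y \<notin> W"
  shows "finite_add_subgroup (add_line F W y)" and "scalar_closed F (add_line F W y)"
    and "card (add_line F W y) = card F * card W"
    and "W \<subseteq> add_line F W y" and "y \<in> add_line F W y"
proof -
  note inj = add_line_sum_inj[OF W y]
  have Wf: "finite W" "0 \<in> W" and Wa: "\<And>x z. x \<in> W \<Longrightarrow> z \<in> W \<Longrightarrow> x + z \<in> W"
    and Wn: "\<And>x. x \<in> W \<Longrightarrow> - x \<in> W" and Ws: "\<And>c x. c \<in> F \<Longrightarrow> x \<in> W \<Longrightarrow> c * x \<in> W"
    using W by (auto simp: finite_add_subgroup_def scalar_closed_def)
  show "card (add_line F W y) = card F * card W"
    unfolding add_line_def using card_image[OF inj(1)] card_image[OF inj(2)]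
    by (simp add: card_cartesian_product)
  show "finite_add_subgroup (add_line F W y)"
    unfolding finite_add_subgroup_def
  proof (intro conjI ballI)
    show "finite (add_line F W y)" using finite_F Wf by (simp add: add_line_def)
    show "0 \<in> add_line F W y" unfolding add_line_iff using zero_in_F Wf by force
  next
    fix x z assume "x \<in> add_line F W y" "z \<in> add_line F W y"
    then obtain c w c' w' where "c \<in> F" "w \<in> W" "c' \<in> F" "w' \<in> W" "x = c * y + w" "z = c' * y + w'"
      unfolding add_line_iff by blast
    moreover from this have "x + z = (c + c') * y + (w + w')" by (simp add: algebra_simps)
    ultimately show "x + z \<in> add_line F W y" unfolding add_line_iff using add_in_F Wa by blast
  next
    fix x assume "x \<in> add_line F W y"
    then obtain c w where "c \<in> F" "w \<in> W" "x = c * y + w" unfolding add_line_iff by blast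
    moreover from this have "- x = (- c) * y + (- w)" by simp
    ultimately show "- x \<in> add_line F W y" unfolding add_line_iff using uminus_in_F Wn by blast
  qed
  show "scalar_closed F (add_line F W y)"
    unfolding scalar_closed_def
  proof (intro ballI)
    fix d x assume "d \<in> F" "x \<in> add_line F W y"
    then obtain c w where "c \<in> F" "w \<in> W" "x = c * y + w" unfolding add_line_iff by blast
    moreover from this have "d * x = (d * c) * y + d * w" by (simp add: algebra_simps)
    ultimately show "d * x \<in> add_line F W y" unfolding add_line_iff using mult_in_F Ws \<open>d \<in> F\<close> by blast
  qed
  show "W \<subseteq> add_line F W y" using zero_in_F by (force simp: add_line_iff)
  show "y \<in> add_line F W y" unfolding add_line_iff using one_in_F Wf by force
qed

text \<open>Homogeneity of \<open>e\<^sub>W\<close> turns the factors over the new line into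
\<open>\<Prod>\<^sub>c\<^sub>\<noteq>\<^sub>0 (1 - t/c) = 1 - t\<^sup>q\<^sup>-\<^sup>1\<close> with \<open>t = e\<^sub>W(X) / e\<^sub>W(y)\<close>.\<close>

lemma fin_exp_add_line:
  assumes W: "finite_add_subgroup W" "scalar_closed F W" and y: "y \<notin> W"
  shows "fin_exp (add_line F W y) X = fin_exp W X - fin_exp W X ^ card F / fin_exp W y ^ (card F - 1)"
proof -
  note inj = add_line_sum_inj[OF W y]
  define U where "U = (\<lambda>c. c * y) ` F"
  have "y \<noteq> 0" using y W by (auto simp: finite_add_subgroup_def)
  hence U0: "U - {0} = (\<lambda>c. c * y) ` (F - {0})" by (auto simp: U_def)
  have "fin_exp (add_line F W y) X = fin_exp W X * (\<Prod>u\<in>U-{0}. (1 - fin_exp W X / fin_exp W u))"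
    by (rule fin_exp_direct_sum[OF W(1)]) (use finite_F zero_in_F inj in \<open>auto simp: U_def add_line_def\<close>)
  also have "(\<Prod>u\<in>U-{0}. (1 - fin_exp W X / fin_exp W u))
      = (\<Prod>c\<in>F-{0}. (1 - fin_exp W X / fin_exp W (c * y)))"
    unfolding U0 by (rule prod.reindex_cong[OF inj_on_subset[OF inj(2)]]) auto
  also have "\<dots> = (\<Prod>c\<in>F-{0}. (1 - (fin_exp W X / fin_exp W y) / c))"
    by (intro prod.cong refl) (simp add: fin_exp_scalar[OF subfield W(2)])
  also have "\<dots> = 1 - (fin_exp W X / fin_exp W y) ^ (card F - 1)"
    by (rule prod_subfield_units_one_minus[OF subfield finite_F])
  also have "fin_exp W X * \<dots> = fin_exp W X - fin_exp W X * fin_exp W X ^ (card F - 1) / fin_exp W y ^ (card F - 1)"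
    by (simp add: algebra_simps power_divide)
  also have "fin_exp W X * fin_exp W X ^ (card F - 1) = fin_exp W X ^ card F"
    using card_F_ge_2 by (metis Suc_diff_1 less_le_trans pos2 power_Suc)
  finally show ?thesis .
qed

lemma frobenius_sum:
  fixes f :: "'b \<Rightarrow> 'a"
  assumes "finite I"
  shows "(\<Sum>i\<in>I. f i) ^ card F = (\<Sum>i\<in>I. f i ^ card F)"
  using assms
proof (induction I rule: finite_induct)
  case empty thus ?case using card_F_ge_2 by (cases "card F") auto
next
  case (insert x I) thus ?case by (simp add: subfield_frobenius_add[OF subfield finite_F])
qed

lemma q_poly_step:
  fixes f :: "'a \<Rightarrow> 'a" and a :: "nat \<Rightarrow> 'a"
  assumes f: "\<forall>X. f X = (\<Sum>i\<le>k. a i * X ^ (card F ^ i))"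
  shows "\<exists>b. (\<forall>X. f X - f X ^ card F / s = (\<Sum>i\<le>Suc k. b i * X ^ (card F ^ i))) \<and> b 0 = a 0"
proof -
  let ?q = "card F"
  define b where "b i = (if i \<le> k then a i else 0) - (if i = 0 then 0 else a (i - 1) ^ ?q / s)" for i
  have "f X - f X ^ ?q / s = (\<Sum>i\<le>Suc k. b i * X ^ (?q ^ i))" for X
  proof -
    have "f X ^ ?q = (\<Sum>i\<le>k. (a i * X ^ (?q ^ i)) ^ ?q)"
      using f frobenius_sum[where I="{..k}" and f="\<lambda>i. a i * X ^ (card F ^ i)"] by simp
    also have "\<dots> = (\<Sum>i\<le>k. a i ^ ?q * X ^ (?q ^ Suc i))"
      by (intro sum.cong refl) (simp add: power_mult_distrib, metis power_mult mult.commute)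
    finally have fq: "f X ^ ?q / s = (\<Sum>i\<le>k. a i ^ ?q / s * X ^ (?q ^ Suc i))"
      by (simp add: sum_divide_distrib)
    have "(\<Sum>i\<le>Suc k. b i * X ^ (?q ^ i)) =
        (\<Sum>i\<le>Suc k. (if i \<le> k then a i else 0) * X ^ (?q ^ i)) -
        (\<Sum>i\<le>Suc k. (if i = 0 then 0 else a (i - 1) ^ ?q / s) * X ^ (?q ^ i))"
      unfolding b_def by (simp add: sum_subtractf algebra_simps)
    also have "(\<Sum>i\<le>Suc k. (if i \<le> k then a i else 0) * X ^ (?q ^ i)) = (\<Sum>i\<le>k. a i * X ^ (?q ^ i))"
      by (simp add: sum.atMost_Suc)
    also have "(\<Sum>i\<le>Suc k. (if i = 0 then 0 else a (i - 1) ^ ?q / s) * X ^ (?q ^ i)) =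
        (\<Sum>i\<le>k. a i ^ ?q / s * X ^ (?q ^ Suc i))"
      by (subst sum.atMost_Suc_shift) simp
    finally show ?thesis using f fq by simp
  qed
  moreover have "b 0 = a 0" by (simp add: b_def)
  ultimately show ?thesis by blast
qed

lemma fin_exp_add_line_q_poly:
  assumes W: "finite_add_subgroup W" "scalar_closed F W" and y: "y \<notin> W"
    and f: "\<forall>X. fin_exp W X = (\<Sum>i\<le>k. a i * X ^ (card F ^ i))"
  shows "\<exists>b. (\<forall>X. fin_exp (add_line F W y) X = (\<Sum>i\<le>Suc k. b i * X ^ (card F ^ i))) \<and> b 0 = a 0"
  using q_poly_step[OF f, of "fin_exp W y ^ (card F - 1)"] fin_exp_add_line[OF W y] by simp

lemma fin_exp_top_coeff:
  fixes Y :: "'a set" and a :: "nat \<Rightarrow> 'a"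
  assumes inf: "infinite (UNIV :: 'a set)"
    and Y: "finite Y" "0 \<in> Y" "card Y = card F ^ n"
    and f: "\<forall>X. fin_exp Y X = (\<Sum>i\<le>n. a i * X ^ (card F ^ i))"
  shows "a n = (\<Prod>y\<in>Y-{0}. - 1 / y)"
proof -
  let ?q = "card F"
  define Q where "Q = (\<Prod>y\<in>Y-{0}. [:1, - 1 / y:])"
  define p where "p = [:0, 1:] * Q"
  define r where "r = (\<Sum>i\<le>n. monom (a i) (?q ^ i))"
  have Qnz: "Q \<noteq> 0" unfolding Q_def using Y by (auto simp: prod_zero_iff)
  have dQ: "degree Q = card Y - 1" unfolding Q_def using Y
    by (subst degree_prod_eq_sum_degree) auto
  have dp: "degree p = ?q ^ n" unfolding p_def using Qnz dQ Y card_F_ge_2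
    by (subst degree_mult_eq) auto
  have "lead_coeff Q = (\<Prod>y\<in>Y-{0}. - 1 / y)"
    unfolding Q_def lead_coeff_prod by (intro prod.cong refl) auto
  hence lp: "lead_coeff p = (\<Prod>y\<in>Y-{0}. - 1 / y)"
    unfolding p_def using Qnz by (simp add: lead_coeff_mult)
  have "poly p X = poly r X" for X
    using f[rule_format, of X] unfolding p_def Q_def r_def fin_exp_def
    by (simp add: poly_prod poly_sum poly_monom)
  hence "{x. poly (p - r) x = 0} = UNIV" by simp
  hence "p = r" using poly_roots_finite[of "p - r"] inf by (metis eq_iff_diff_eq_0)
  have "?q ^ i = ?q ^ n \<longleftrightarrow> i = n" for i
    using card_F_ge_2 by (simp add: power_inject_exp)
  hence "coeff r (?q ^ n) = a n"
    unfolding r_def coeff_sum coeff_monom by (simp add: sum.delta)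
  thus ?thesis using lp dp \<open>p = r\<close> by simp
qed

end

section \<open>Non-archimedean absolute values\<close>

lemma eventually_div_less:
  fixes C e R :: real
  assumes "R > 0" "e > 0"
  shows "\<exists>N\<ge>R. \<forall>r\<ge>N. C / r < e"
proof (intro exI[of _ "max R (\<bar>C\<bar> / e + 1)"] conjI allI impI)
  fix r assume r: "max R (\<bar>C\<bar> / e + 1) \<le> r"
  hence "\<bar>C\<bar> / e < r" "r > 0" using assms by auto
  hence "\<bar>C\<bar> < e * r" using assms(2) by (simp add: divide_less_eq mult.commute)
  thus "C / r < e" using \<open>r > 0\<close> by (simp add: divide_less_eq)
qed simp

locale nonarch_field =
  fixes v :: "'k::field \<Rightarrow> real"
  assumes nonarch: "nonarch_abs v"
begin

lemma v_nonneg [simp]: "v x \<ge> 0" and v_eq_0_iff [simp]: "v x = 0 \<longleftrightarrow> x = 0"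
  and v_mult: "v (x * y) = v x * v y" and v_add_le: "v (x + y) \<le> max (v x) (v y)"
  using nonarch by (auto simp: nonarch_abs_def)

lemma v_0 [simp]: "v 0 = 0" by simp

lemma v_pos: "x \<noteq> 0 \<Longrightarrow> v x > 0" using v_nonneg[of x] v_eq_0_iff[of x] by linarith

lemma v_1 [simp]: "v 1 = 1"
proof -
  have "v 1 = v 1 * v 1" using v_mult[of 1 1] by simp
  moreover have "v 1 \<noteq> 0" by simp
  ultimately show ?thesis by simp
qed

lemma v_neg1: "v (-1) = 1"
proof -
  have "v (-1) * v (-1) = 1" using v_mult[of "-1" "-1"] by simp
  hence "v (-1) ^ 2 = 1" by (simp add: power2_eq_square)
  thus ?thesis using power_eq_imp_eq_base[of "v (-1)" 2 1] by simp
qed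

lemma v_uminus [simp]: "v (- x) = v x"
  using v_mult[of "-1" x] v_neg1 by simp

lemma v_minus_commute: "v (x - y) = v (y - x)"
  using v_uminus[of "x - y"] by simp

lemma v_inverse: "v (inverse x) = inverse (v x)"
proof (cases "x = 0")
  case False
  hence "v x * v (inverse x) = 1" using v_mult[of x "inverse x"] by simp
  thus ?thesis by (metis inverse_unique)
qed simp

lemma v_divide: "v (x / y) = v x / v y"
  by (simp add: divide_inverse v_mult v_inverse)

lemma v_power: "v (x ^ n) = v x ^ n"
  by (induction n) (simp_all add: v_mult)

lemma v_prod: "v (\<Prod>i\<in>I. f i) = (\<Prod>i\<in>I. v (f i))"
  by (induction I rule: infinite_finite_induct) (simp_all add: v_mult)

lemma v_diff_le: "v (x - y) \<le> max (v x) (v y)"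
  using v_add_le[of x "- y"] by simp

lemma v_add_eq_right: assumes "v x < v y" shows "v (x + y) = v y"
proof -
  have "v y = v ((x + y) + (- x))" by simp
  also have "\<dots> \<le> max (v (x + y)) (v x)" using v_add_le[of "x + y" "- x"] by simp
  finally have "v y \<le> max (v (x + y)) (v x)" .
  hence "v y \<le> v (x + y)" using assms by auto
  moreover have "v (x + y) \<le> v y" using v_add_le[of x y] assms by simp
  ultimately show ?thesis by simp
qed

lemma v_diff_eq_left: "v x < v y \<Longrightarrow> v (y - x) = v y"
  using v_add_eq_right[of "- x" y] by (simp add: add.commute)

lemma v_abs_diff_le: "\<bar>v x - v y\<bar> \<le> v (x - y)"
proof -
  have h1: "v x \<le> max (v (x - y)) (v y)" using v_add_le[of "x - y" y] by simp
  have h2: "v y \<le> max (v (x - y)) (v x)" using v_add_le[of "y - x" x] v_minus_commute[of x y] by simp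
  have "v x - v y \<le> v (x - y)" using h1 v_nonneg[of "x - y"] v_nonneg[of y] unfolding le_max_iff_disj by (smt (verit))
  moreover have "v y - v x \<le> v (x - y)" using h2 v_nonneg[of "x - y"] v_nonneg[of x] unfolding le_max_iff_disj by (smt (verit))
  ultimately show ?thesis by (simp add: abs_le_iff)
qed

lemma v_prod_minus_1_le:
  assumes "finite I" "\<And>i. i \<in> I \<Longrightarrow> v (f i - 1) \<le> d" "0 \<le> d" "d \<le> 1"
  shows "v ((\<Prod>i\<in>I. f i) - 1) \<le> d"
  using assms
proof (induction I rule: finite_induct)
  case empty thus ?case by simp
next
  case (insert x I)
  let ?P = "\<Prod>i\<in>I. f i"
  have IH: "v (?P - 1) \<le> d" using insert by auto
  have vP: "v ?P \<le> 1"
  proof -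
    have "v ?P = v ((?P - 1) + 1)" by simp
    also have "\<dots> \<le> max (v (?P - 1)) (v 1)" by (rule v_add_le)
    finally show ?thesis using IH insert.prems by simp
  qed
  have "f x * ?P - 1 = (f x - 1) * ?P + (?P - 1)" by (simp add: algebra_simps)
  hence "v (f x * ?P - 1) \<le> max (v ((f x - 1) * ?P)) (v (?P - 1))" using v_add_le by metis
  also have "v ((f x - 1) * ?P) \<le> d"
  proof -
    have "v ((f x - 1) * ?P) = v (f x - 1) * v ?P" by (rule v_mult)
    also have "\<dots> \<le> d * 1" using insert.prems vP by (intro mult_mono) auto
    finally show ?thesis by simp
  qed
  finally show ?case using IH insert by simp
qed

definition tends_real :: "(real \<Rightarrow> 'k) \<Rightarrow> 'k \<Rightarrow> bool" where
  "tends_real f L \<longleftrightarrow> (\<forall>e>0. \<exists>R. \<forall>r\<ge>R. v (f r - L) < e)"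

lemma tends_real_unique: assumes "tends_real f L" "tends_real f M" shows "L = M"
proof (rule ccontr)
  assume "L \<noteq> M"
  hence e: "v (L - M) > 0" using v_pos by simp
  obtain R1 where R1: "\<forall>r\<ge>R1. v (f r - L) < v (L - M)" using assms(1) e unfolding tends_real_def by blast
  obtain R2 where R2: "\<forall>r\<ge>R2. v (f r - M) < v (L - M)" using assms(2) e unfolding tends_real_def by blast
  define r where "r = max R1 R2"
  have "v (L - M) = v ((f r - M) - (f r - L))" by simp
  also have "\<dots> \<le> max (v (f r - M)) (v (f r - L))" by (rule v_diff_le)
  also have "\<dots> < v (L - M)" using R1 R2 by (simp add: r_def)
  finally show False by simp
qed

lemma tends_real_const: "tends_real (\<lambda>r. c) c" unfolding tends_real_def by auto

lemma tends_real_cong: assumes "tends_real f L" "\<And>r. r \<ge> R \<Longrightarrow> g r = f r" shows "tends_real g L"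
  unfolding tends_real_def
proof (intro allI impI)
  fix e :: real assume "e > 0"
  then obtain R1 where "\<forall>r\<ge>R1. v (f r - L) < e" using assms unfolding tends_real_def by blast
  thus "\<exists>R. \<forall>r\<ge>R. v (g r - L) < e" using assms(2) by (intro exI[of _ "max R R1"]) auto
qed

lemma tends_real_add: assumes "tends_real f L" "tends_real g M" shows "tends_real (\<lambda>r. f r + g r) (L + M)"
  unfolding tends_real_def
proof (intro allI impI)
  fix e :: real assume e: "e > 0"
  obtain R1 where R1: "\<forall>r\<ge>R1. v (f r - L) < e" using assms(1) e unfolding tends_real_def by blast
  obtain R2 where R2: "\<forall>r\<ge>R2. v (g r - M) < e" using assms(2) e unfolding tends_real_def by blast
  show "\<exists>R. \<forall>r\<ge>R. v (f r + g r - (L + M)) < e"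
  proof (intro exI[of _ "max R1 R2"] allI impI)
    fix r assume "max R1 R2 \<le> r"
    have "v (f r + g r - (L + M)) = v ((f r - L) + (g r - M))" by (simp add: algebra_simps)
    also have "\<dots> \<le> max (v (f r - L)) (v (g r - M))" by (rule v_add_le)
    also have "\<dots> < e" using R1 R2 \<open>max R1 R2 \<le> r\<close> by auto
    finally show "v (f r + g r - (L + M)) < e" .
  qed
qed

lemma tends_real_bounded: assumes "tends_real f L" shows "\<exists>R. \<forall>r\<ge>R. v (f r) \<le> v L + 1"
proof -
  obtain R where R: "\<forall>r\<ge>R. v (f r - L) < 1" using assms unfolding tends_real_def by (meson zero_less_one)
  have "v (f r) \<le> v L + 1" if "r \<ge> R" for r
  proof -
    have "v (f r) = v ((f r - L) + L)" by simp
    also have "\<dots> \<le> max (v (f r - L)) (v L)" by (rule v_add_le)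
    also have "\<dots> \<le> v L + 1"
    proof -
      have "v (f r - L) < 1" using R that by simp
      thus ?thesis using v_nonneg[of L] by (smt (verit) max_def)
    qed
    finally show ?thesis .
  qed
  thus ?thesis by blast
qed

lemma tends_real_mult: assumes "tends_real f L" "tends_real g M" shows "tends_real (\<lambda>r. f r * g r) (L * M)"
  unfolding tends_real_def
proof (intro allI impI)
  fix e :: real assume e: "e > 0"
  obtain R0 where R0: "\<forall>r\<ge>R0. v (f r) \<le> v L + 1" using tends_real_bounded[OF assms(1)] by blast
  define e1 where "e1 = e / (v L + 1)"
  define e2 where "e2 = e / (v M + 1)"
  have e1: "e1 > 0" and e2: "e2 > 0" using e v_nonneg[of L] v_nonneg[of M] by (auto simp: e1_def e2_def add_nonneg_pos)
  obtain R1 where R1: "\<forall>r\<ge>R1. v (f r - L) < e2" using assms(1) e2 unfolding tends_real_def by blast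
  obtain R2 where R2: "\<forall>r\<ge>R2. v (g r - M) < e1" using assms(2) e1 unfolding tends_real_def by blast
  show "\<exists>R. \<forall>r\<ge>R. v (f r * g r - L * M) < e"
  proof (intro exI[of _ "max R0 (max R1 R2)"] allI impI)
    fix r assume r: "max R0 (max R1 R2) \<le> r"
    have a: "v (f r * (g r - M)) < e"
    proof -
      have "v (f r * (g r - M)) = v (f r) * v (g r - M)" by (rule v_mult)
      also have "\<dots> \<le> (v L + 1) * v (g r - M)" using R0 r by (intro mult_right_mono) auto
      also have "\<dots> < (v L + 1) * e1" using R2 r by (intro mult_strict_left_mono) (auto simp: add_nonneg_pos)
      also have "\<dots> = e" unfolding e1_def using v_nonneg[of L]
        by (metis add_nonneg_pos less_numeral_extra(1) nonzero_mult_div_cancel_left order_less_irrefl times_divide_eq_right)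
      finally show ?thesis .
    qed
    have b: "v ((f r - L) * M) < e"
    proof -
      have "v ((f r - L) * M) = v (f r - L) * v M" by (rule v_mult)
      also have "\<dots> \<le> e2 * v M" using R1 r by (intro mult_right_mono) auto
      also have "\<dots> < e2 * (v M + 1)" using e2 by simp
      also have "\<dots> = e" unfolding e2_def using v_nonneg[of M]
        by (metis add_nonneg_pos less_numeral_extra(1) nonzero_mult_div_cancel_right order_less_irrefl times_divide_eq_left)
      finally show ?thesis .
    qed
    have "v (f r * g r - L * M) = v (f r * (g r - M) + (f r - L) * M)" by (simp add: algebra_simps)
    also have "\<dots> \<le> max (v (f r * (g r - M))) (v ((f r - L) * M))" by (rule v_add_le)
    also have "\<dots> < e" using a b by simp
    finally show "v (f r * g r - L * M) < e" .
  qed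
qed

lemma tends_real_prod: "finite I \<Longrightarrow> (\<And>i. i \<in> I \<Longrightarrow> tends_real (f i) (L i)) \<Longrightarrow> tends_real (\<lambda>r. \<Prod>i\<in>I. f i r) (\<Prod>i\<in>I. L i)"
proof (induction I rule: finite_induct)
  case empty thus ?case by (simp add: tends_real_const)
next
  case (insert x I)
  thus ?case using tends_real_mult[of "f x" "L x" "\<lambda>r. \<Prod>i\<in>I. f i r"] by simp
qed

lemma tends_real_v_eventually: assumes "tends_real f L" "\<And>r. r \<ge> R \<Longrightarrow> v (f r) = c" shows "v L = c"
proof (rule ccontr)
  assume ne: "v L \<noteq> c"
  hence e: "\<bar>v L - c\<bar> > 0" by simp
  obtain R1 where R1: "\<forall>r\<ge>R1. v (f r - L) < \<bar>v L - c\<bar>" using assms(1) e unfolding tends_real_def by blast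
  define r where "r = max R R1"
  have "\<bar>v (f r) - v L\<bar> \<le> v (f r - L)" by (rule v_abs_diff_le)
  also have "\<dots> < \<bar>v L - c\<bar>" using R1 by (simp add: r_def)
  finally show False using assms(2)[of r] by (simp add: r_def)
qed

lemma tends_real_inverse: assumes "tends_real f L" "L \<noteq> 0" shows "tends_real (\<lambda>r. inverse (f r)) (inverse L)"
  unfolding tends_real_def
proof (intro allI impI)
  fix e :: real assume e: "e > 0"
  have vL: "v L > 0" using assms v_pos by simp
  define e' where "e' = min (v L) (e * v L * v L)"
  have e': "e' > 0" using e vL by (simp add: e'_def)
  obtain R where R: "\<forall>r\<ge>R. v (f r - L) < e'" using assms(1) e' unfolding tends_real_def by blast
  show "\<exists>R. \<forall>r\<ge>R. v (inverse (f r) - inverse L) < e"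
  proof (intro exI[of _ R] allI impI)
    fix r assume r: "R \<le> r"
    have d: "v (f r - L) < v L" "v (f r - L) < e * v L * v L" using R r by (auto simp: e'_def)
    have vf: "v (f r) = v L" using v_add_eq_right[OF d(1)] by simp
    hence fnz: "f r \<noteq> 0" using vL by auto
    have "inverse (f r) - inverse L = (L - f r) / (f r * L)" using fnz assms(2) by (simp add: field_simps)
    hence "v (inverse (f r) - inverse L) = v (f r - L) / (v L * v L)"
      by (simp add: v_divide v_mult vf v_minus_commute)
    also have "\<dots> < e" using d(2) vL by (simp add: divide_less_eq)
    finally show "v (inverse (f r) - inverse L) < e" .
  qed
qed

lemma tends_real_uminus: "tends_real g M \<Longrightarrow> tends_real (\<lambda>r. - g r) (- M)"
proof -
  assume "tends_real g M"
  moreover have "v (- g r - - M) = v (g r - M)" for r using v_uminus[of "g r - M"] by simp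
  ultimately show ?thesis unfolding tends_real_def by simp
qed

lemma tends_real_diff: "tends_real f L \<Longrightarrow> tends_real g M \<Longrightarrow> tends_real (\<lambda>r. f r - g r) (L - M)"
  using tends_real_add[OF _ tends_real_uminus, of f L g M] by simp

lemma tends_real_divide: "tends_real f L \<Longrightarrow> tends_real g M \<Longrightarrow> M \<noteq> 0 \<Longrightarrow> tends_real (\<lambda>r. f r / g r) (L / M)"
  using tends_real_mult[OF _ tends_real_inverse] by (simp add: divide_inverse)

lemma tends_real_rescale: assumes "tends_real f L" "c > 0" shows "tends_real (\<lambda>r. f (r / c)) L"
  unfolding tends_real_def
proof (intro allI impI)
  fix e :: real assume "e > 0"
  then obtain R where R: "\<forall>r\<ge>R. v (f r - L) < e" using assms unfolding tends_real_def by blast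
  show "\<exists>R. \<forall>r\<ge>R. v (f (r / c) - L) < e"
    using R assms(2) by (intro exI[of _ "R * c"]) (auto simp: field_simps)
qed

lemma tends_abs_unique: assumes "tends_abs v X L" "tends_abs v X M" shows "L = M"
proof (rule ccontr)
  assume "L \<noteq> M"
  hence e: "v (L - M) > 0" using v_pos by simp
  obtain N1 where N1: "\<forall>n\<ge>N1. v (X n - L) < v (L - M)" using assms(1) e unfolding tends_abs_def by blast
  obtain N2 where N2: "\<forall>n\<ge>N2. v (X n - M) < v (L - M)" using assms(2) e unfolding tends_abs_def by blast
  define n where "n = max N1 N2"
  have "v (L - M) = v ((X n - M) - (X n - L))" by simp
  also have "\<dots> \<le> max (v (X n - M)) (v (X n - L))" by (rule v_diff_le)
  also have "\<dots> < v (L - M)" using N1 N2 by (simp add: n_def)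
  finally show False by simp
qed

lemma tends_abs_of_bounded_increments:
  assumes complete: "complete_abs v" and R: "R > 0"
    and bnd: "\<And>r r'. R \<le> r \<Longrightarrow> r \<le> r' \<Longrightarrow> v (f r' - f r) \<le> C / r"
  obtains L where "tends_abs v (\<lambda>n. f (real n)) L"
proof -
  have "\<exists>N. \<forall>m\<ge>N. \<forall>n\<ge>N. v (f (real m) - f (real n)) < e" if e: "e > 0" for e
  proof -
    obtain N where N: "N \<ge> R" "\<forall>r\<ge>N. C / r < e" using eventually_div_less[OF R e] by blast
    obtain M :: nat where M: "real M \<ge> N" using real_arch_simple by blast
    have "v (f (real m) - f (real n)) < e" if "m \<ge> M" "n \<ge> M" for m n
    proof -
      have "v (f (real k) - f (real M)) < e" if "k \<ge> M" for k
        using bnd[of "real M" "real k"] N M that by fastforce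
      hence "max (v (f (real m) - f (real M))) (v (f (real n) - f (real M))) < e" using that by simp
      moreover have "v (f (real m) - f (real n))
          \<le> max (v (f (real m) - f (real M))) (v (f (real n) - f (real M)))"
        using v_diff_le[of "f (real m) - f (real M)" "f (real n) - f (real M)"] by simp
      ultimately show ?thesis by linarith
    qed
    thus ?thesis by blast
  qed
  hence "\<exists>L. tends_abs v (\<lambda>n. f (real n)) L"
    using complete[unfolded complete_abs_def, rule_format, of "\<lambda>n. f (real n)"] by blast
  thus ?thesis using that by blast
qed

lemma tends_real_of_bounded_increments:
  assumes R: "R > 0" and C: "C \<ge> 0"
    and bnd: "\<And>r r'. R \<le> r \<Longrightarrow> r \<le> r' \<Longrightarrow> v (f r' - f r) \<le> C / r"
    and L: "tends_abs v (\<lambda>n. f (real n)) L"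
  shows "tends_real f L"
proof -
  have rb: "v (f r - L) \<le> C / r" if r: "r \<ge> R" for r
  proof (rule ccontr)
    assume "\<not> ?thesis"
    hence e: "v (f r - L) - C / r > 0" by simp
    obtain N where N: "\<forall>n\<ge>N. v (f (real n) - L) < v (f r - L) - C / r"
      using L e unfolding tends_abs_def by blast
    obtain n :: nat where n: "real n \<ge> r" "n \<ge> N" using real_arch_simple[of "max r (real N)"]
      by (metis max.bounded_iff of_nat_le_iff)
    have "v (f r - L) \<le> max (v (f (real n) - L)) (v (f (real n) - f r))"
      using v_diff_le[of "f (real n) - L" "f (real n) - f r"] by simp
    also have "\<dots> < v (f r - L)"
    proof -
      have "v (f (real n) - L) < v (f r - L) - C / r" using N n by simp
      moreover have "C / r \<ge> 0" using C r R by simp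
      ultimately show ?thesis using bnd[OF r n(1)] e by (simp add: max_less_iff_conj)
    qed
    finally show False by simp
  qed
  show ?thesis unfolding tends_real_def
  proof (intro allI impI)
    fix e :: real assume "e > 0"
    then obtain N where "N \<ge> R" "\<forall>r\<ge>N. C / r < e" using eventually_div_less[OF R] by blast
    thus "\<exists>N. \<forall>r\<ge>N. v (f r - L) < e" using rb by (meson le_less_trans order_trans)
  qed
qed

end

section \<open>The ring \<open>A = \<F>\<^sub>q[T]\<close>\<close>

locale Cinf_setting = nonarch_field v for v :: "'k::field \<Rightarrow> real" +
  fixes Fq :: "'k set" and q :: nat and T :: 'k
  assumes model: "Cinf_model Fq q T v"
begin

lemma complete: "complete_abs v" and subfield: "is_subfield Fq"
  and finite_F: "finite Fq" and card_Fq: "card Fq = q" and v_T: "v T = real q"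
  using model by (auto simp: Cinf_model_def)

sublocale finite_subfield Fq by unfold_locales (rule subfield, rule finite_F)

lemma q_ge_2: "q \<ge> 2" using card_F_ge_2 card_Fq by simp
lemma q_gt_1: "real q > 1" using q_ge_2 by simp
lemma q_power_pos: "real q ^ n > 0" using q_gt_1 by simp
lemma q_power_ge_1: "real q ^ n \<ge> 1" using q_gt_1 by simp

lemma v_Fq_eq_1: assumes "c \<in> Fq" "c \<noteq> 0" shows "v c = 1"
proof -
  have "c ^ (card Fq - 1) = 1" by (rule subfield_power_card_minus_1[OF subfield finite_F assms])
  hence "v c ^ (q - 1) = 1" using card_Fq v_power[of c "q - 1"] by simp
  thus ?thesis using power_eq_imp_eq_base[of "v c" "q - 1" 1] q_ge_2 by simp
qed

lemma v_Fq_le_1: "c \<in> Fq \<Longrightarrow> v c \<le> 1"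
  using v_Fq_eq_1 by (cases "c = 0") auto

lemma T_nonzero: "T \<noteq> 0" using v_T q_ge_2 v_eq_0_iff[of T] by auto

lemma infinite_UNIV_k: "infinite (UNIV :: 'k set)"
proof -
  have "inj (\<lambda>n::nat. T ^ n)"
  proof (rule injI)
    fix m n :: nat assume "T ^ m = T ^ n"
    hence "real q ^ m = real q ^ n" using v_power[of T] v_T by metis
    thus "m = n" using q_gt_1 by (simp add: power_inject_exp)
  qed
  thus ?thesis using infinite_UNIV_nat by (metis finite_imageD finite_subset subset_UNIV)
qed

abbreviation "A \<equiv> A_ring Fq T"

definition Fq_poly :: "'k poly \<Rightarrow> bool" where "Fq_poly p \<longleftrightarrow> (\<forall>i. coeff p i \<in> Fq)"

lemma Fq_poly_pCons: "Fq_poly (pCons c p) \<longleftrightarrow> c \<in> Fq \<and> Fq_poly p"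
  unfolding Fq_poly_def by (auto simp: coeff_pCons split: nat.split)

lemma A_iff: "x \<in> A \<longleftrightarrow> (\<exists>p. Fq_poly p \<and> x = poly p T)"
  unfolding A_ring_def Fq_poly_def by auto

lemma v_poly_T: "Fq_poly p \<Longrightarrow> p \<noteq> 0 \<Longrightarrow> v (poly p T) = real q ^ degree p"
proof (induction p)
  case 0 thus ?case by simp
next
  case (pCons c p)
  have c: "c \<in> Fq" and p: "Fq_poly p" using pCons.prems by (auto simp: Fq_poly_pCons)
  show ?case
  proof (cases "p = 0")
    case True
    hence "c \<noteq> 0" using pCons by auto
    thus ?thesis using True c v_Fq_eq_1 by simp
  next
    case False
    have vp: "v (poly p T) = real q ^ degree p" using pCons.IH[OF p False] .
    have "v (T * poly p T) = real q ^ Suc (degree p)" by (simp add: v_mult vp v_T)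
    moreover have "real q ^ Suc (degree p) > 1" using one_less_power[OF q_gt_1, of "Suc (degree p)"] by simp
    moreover have "v c \<le> 1" using v_Fq_le_1[OF c] .
    ultimately have "v (c + T * poly p T) = real q ^ Suc (degree p)" using v_add_eq_right[of c "T * poly p T"] by simp
    thus ?thesis using False by simp
  qed
qed

lemma v_A_power: assumes "x \<in> A" "x \<noteq> 0" shows "\<exists>k. v x = real q ^ k"
  using assms v_poly_T unfolding A_iff by (metis poly_0)

lemma v_A_ge_1: "x \<in> A \<Longrightarrow> x \<noteq> 0 \<Longrightarrow> v x \<ge> 1"
  using v_A_power q_gt_1 by (metis less_imp_le one_le_power)

lemma zero_in_A: "0 \<in> A" unfolding A_iff by (intro exI[of _ 0]) (simp add: Fq_poly_def zero_in_F)
lemma Fq_subset_A: "c \<in> Fq \<Longrightarrow> c \<in> A" unfolding A_iff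
  by (intro exI[of _ "[:c:]"]) (auto simp: Fq_poly_def coeff_pCons zero_in_F split: nat.split)
lemma one_in_A: "1 \<in> A" using Fq_subset_A one_in_F by blast
lemma add_T_mult_in_A: assumes "c \<in> Fq" "b \<in> A" shows "c + T * b \<in> A"
proof -
  obtain p where p: "Fq_poly p" "b = poly p T" using assms(2) unfolding A_iff by blast
  have "Fq_poly (pCons c p)" using p assms by (simp add: Fq_poly_pCons)
  thus ?thesis unfolding A_iff using p by (intro exI[of _ "pCons c p"]) simp
qed
lemma T_in_A: "T \<in> A" using add_T_mult_in_A[OF zero_in_F one_in_A] by simp
lemma add_in_A: assumes "x \<in> A" "y \<in> A" shows "x + y \<in> A"
proof -
  obtain p where p: "Fq_poly p" "x = poly p T" using assms(1) unfolding A_iff by blast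
  obtain p' where p': "Fq_poly p'" "y = poly p' T" using assms(2) unfolding A_iff by blast
  have "Fq_poly (p + p')" using p p' by (simp add: Fq_poly_def add_in_F)
  thus ?thesis unfolding A_iff using p p' by (intro exI[of _ "p + p'"]) (simp add: poly_add)
qed
lemma uminus_in_A: assumes "x \<in> A" shows "- x \<in> A"
proof -
  obtain p where p: "Fq_poly p" "x = poly p T" using assms(1) unfolding A_iff by blast
  have "Fq_poly (- p)" using p by (simp add: Fq_poly_def uminus_in_F)
  thus ?thesis unfolding A_iff using p by (intro exI[of _ "- p"]) simp
qed
lemma diff_in_A: "x \<in> A \<Longrightarrow> y \<in> A \<Longrightarrow> x - y \<in> A"
  using add_in_A uminus_in_A by (metis diff_conv_add_uminus)
lemma scalar_in_A: assumes "c \<in> Fq" "x \<in> A" shows "c * x \<in> A"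
proof -
  obtain p where p: "Fq_poly p" "x = poly p T" using assms(2) unfolding A_iff by blast
  have "Fq_poly (smult c p)" using p assms(1) by (simp add: Fq_poly_def mult_in_F)
  thus ?thesis unfolding A_iff using p by (intro exI[of _ "smult c p"]) simp
qed
lemma T_mult_in_A: "x \<in> A \<Longrightarrow> T * x \<in> A" using add_T_mult_in_A[OF zero_in_F] by simp

lemma A_T_adic_decomp: assumes "x \<in> A" obtains c b where "c \<in> Fq" "b \<in> A" "x = c + T * b"
proof -
  obtain p where p: "Fq_poly p" "x = poly p T" using assms unfolding A_iff by blast
  obtain c p' where "p = pCons c p'" by (cases p)
  thus ?thesis using p that by (auto simp: Fq_poly_pCons A_iff)
qed

lemma v_add_T_mult: assumes "c \<in> Fq" "b \<in> A" "b \<noteq> 0" shows "v (c + T * b) = real q * v b"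
proof -
  have "v (T * b) = real q * v b" by (simp add: v_mult v_T)
  moreover have "real q * v b > 1"
  proof -
    have "real q * v b \<ge> real q * 1" using v_A_ge_1[OF assms(2,3)] q_gt_1 by (intro mult_left_mono) auto
    thus ?thesis using q_gt_1 by linarith
  qed
  moreover have "v c \<le> 1" using v_Fq_le_1[OF assms(1)] .
  ultimately show ?thesis using v_add_eq_right[of c "T * b"] by simp
qed

lemma T_adic_decomp_unique:
  assumes "c \<in> Fq" "b \<in> A" "c' \<in> Fq" "b' \<in> A" "c + T * b = c' + T * b'"
  shows "c = c' \<and> b = b'"
proof -
  have "b = b'"
  proof (rule ccontr)
    assume "b \<noteq> b'"
    hence "b - b' \<noteq> 0" by simp
    hence "v (T * (b - b')) \<ge> real q" using v_A_ge_1[OF diff_in_A[OF assms(2,4)]] q_gt_1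
      by (simp add: v_mult v_T)
    moreover have "T * (b - b') = c' - c" using assms(5) by (simp add: algebra_simps)
    moreover have "v (c' - c) \<le> 1" using v_Fq_le_1[OF diff_in_F[OF assms(3,1)]] .
    ultimately show False using q_gt_1 by simp
  qed
  thus ?thesis using assms(5) by simp
qed

definition A_deg_le :: "nat \<Rightarrow> 'k set" where "A_deg_le d = {x \<in> A. v x \<le> real q ^ d}"

lemma A_deg_le_0: "A_deg_le 0 = Fq"
proof
  show "A_deg_le 0 \<subseteq> Fq"
  proof
    fix x assume "x \<in> A_deg_le 0"
    hence x: "x \<in> A" "v x \<le> 1" by (auto simp: A_deg_le_def)
    obtain c b where cb: "c \<in> Fq" "b \<in> A" "x = c + T * b" using A_T_adic_decomp[OF x(1)] by blast
    have "b = 0"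
    proof (rule ccontr)
      assume "b \<noteq> 0"
      hence "v x = real q * v b" using v_add_T_mult cb by simp
      also have "\<dots> \<ge> real q" using v_A_ge_1[OF cb(2) \<open>b \<noteq> 0\<close>] q_gt_1 by simp
      finally show False using x q_gt_1 by simp
    qed
    thus "x \<in> Fq" using cb by simp
  qed
  show "Fq \<subseteq> A_deg_le 0" using Fq_subset_A v_Fq_le_1 by (auto simp: A_deg_le_def)
qed

lemma A_deg_le_Suc: "A_deg_le (Suc d) = (\<lambda>(c,b). c + T * b) ` (Fq \<times> A_deg_le d)"
proof
  show "A_deg_le (Suc d) \<subseteq> (\<lambda>(c,b). c + T * b) ` (Fq \<times> A_deg_le d)"
  proof
    fix x assume "x \<in> A_deg_le (Suc d)"
    hence x: "x \<in> A" "v x \<le> real q ^ Suc d" by (auto simp: A_deg_le_def)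
    obtain c b where cb: "c \<in> Fq" "b \<in> A" "x = c + T * b" using A_T_adic_decomp[OF x(1)] by blast
    have "v b \<le> real q ^ d"
    proof (cases "b = 0")
      case False
      hence "real q * v b \<le> real q * real q ^ d" using v_add_T_mult cb x by simp
      thus ?thesis using q_gt_1 by simp
    qed simp
    thus "x \<in> (\<lambda>(c,b). c + T * b) ` (Fq \<times> A_deg_le d)" using cb by (force simp: A_deg_le_def)
  qed
  show "(\<lambda>(c,b). c + T * b) ` (Fq \<times> A_deg_le d) \<subseteq> A_deg_le (Suc d)"
  proof
    fix x assume "x \<in> (\<lambda>(c,b). c + T * b) ` (Fq \<times> A_deg_le d)"
    then obtain c b where cb: "c \<in> Fq" "b \<in> A" "v b \<le> real q ^ d" "x = c + T * b" by (auto simp: A_deg_le_def)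
    have "v x \<le> real q ^ Suc d"
    proof (cases "b = 0")
      case True
      have "1 \<le> real q ^ Suc d" by (rule one_le_power) (use q_gt_1 in simp)
      thus ?thesis using True cb v_Fq_le_1[OF cb(1)] by simp
    next
      case False thus ?thesis using v_add_T_mult[OF cb(1,2) False] cb q_gt_1 by simp
    qed
    thus "x \<in> A_deg_le (Suc d)" using cb add_T_mult_in_A by (simp add: A_deg_le_def)
  qed
qed

lemma A_deg_le_card: "finite (A_deg_le d) \<and> card (A_deg_le d) = q ^ Suc d"
proof (induction d)
  case 0 thus ?case using A_deg_le_0 finite_F card_Fq by simp
next
  case (Suc d)
  have inj: "inj_on (\<lambda>(c,b). c + T * b) (Fq \<times> A_deg_le d)"
    using T_adic_decomp_unique by (auto simp: inj_on_def A_deg_le_def)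
  show ?case unfolding A_deg_le_Suc using Suc finite_F card_Fq card_image[OF inj]
    by (simp add: card_cartesian_product)
qed

lemma A_ball_finite: "finite {x \<in> A. v x \<le> r}"
proof -
  obtain d where "r < real q ^ d" using real_arch_pow[OF q_gt_1] by blast
  hence "{x \<in> A. v x \<le> r} \<subseteq> A_deg_le d" by (auto simp: A_deg_le_def)
  thus ?thesis using A_deg_le_card finite_subset by blast
qed

lemma K_subset_Kinf: "x \<in> K_field Fq T \<Longrightarrow> x \<in> Kinf Fq T v"
  unfolding Kinf_def by (auto intro!: bexI[of _ x])

lemma A_subset_K: "x \<in> A \<Longrightarrow> x \<in> K_field Fq T"
proof -
  assume "x \<in> A"
  hence "\<exists>a b. x = a / b \<and> a \<in> A \<and> b \<in> A \<and> b \<noteq> 0" using one_in_A by (intro exI[of _ x] exI[of _ 1]) simp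
  thus ?thesis unfolding K_field_def by simp
qed

lemma A_subset_Kinf: "x \<in> A \<Longrightarrow> x \<in> Kinf Fq T v" using A_subset_K K_subset_Kinf by blast

lemma A_minus_Fq_div_T_in_Kinf: "x \<in> A \<Longrightarrow> c \<in> Fq \<Longrightarrow> x - c / T \<in> Kinf Fq T v"
proof -
  assume x: "x \<in> A" and c: "c \<in> Fq"
  have "x - c / T = (T * x - c) / T" using T_nonzero by (simp add: field_simps)
  moreover have "T * x - c \<in> A" using diff_in_A[OF T_mult_in_A[OF x] Fq_subset_A[OF c]] .
  ultimately have "x - c / T \<in> K_field Fq T" unfolding K_field_def using T_in_A T_nonzero by blast
  thus ?thesis by (rule K_subset_Kinf)
qed

end

section \<open>The lattice and its division points\<close>

locale orth_lattice = Cinf_setting v Fq q T for v :: "'k::field \<Rightarrow> real" and Fq q T +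
  fixes w1 w2 :: 'k and na nb :: nat
  assumes orth: "orthogonal3 Fq T v w1 w2 1"
    and v_w1: "v w1 = real q ^ na" and v_w2: "v w2 = real q ^ nb" and nb_le_na: "nb \<le> na"
begin

abbreviation "\<Lambda> \<equiv> lattice3 Fq T w1 w2"
abbreviation "K_inf \<equiv> Kinf Fq T v"

lemma v_orth_comb:
  assumes "x1 \<in> K_inf" "x2 \<in> K_inf" "x3 \<in> K_inf"
  shows "v (x1 * w1 + x2 * w2 + x3) = max (v x1 * real q ^ na) (max (v x2 * real q ^ nb) (v x3))"
  using orth assms unfolding orthogonal3_def by (auto simp: v_mult v_w1 v_w2)

lemma lattice_iff: "l \<in> \<Lambda> \<longleftrightarrow> (\<exists>a1 a2 a3. a1 \<in> A \<and> a2 \<in> A \<and> a3 \<in> A \<and> l = a1 * w1 + a2 * w2 + a3)"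
  unfolding lattice3_def by auto

lemma lattice_coords_unique:
  assumes "a1 \<in> A" "a2 \<in> A" "a3 \<in> A" "b1 \<in> A" "b2 \<in> A" "b3 \<in> A"
    and "a1 * w1 + a2 * w2 + a3 = b1 * w1 + b2 * w2 + b3"
  shows "a1 = b1 \<and> a2 = b2 \<and> a3 = b3"
proof -
  have "(a1 - b1) * w1 + (a2 - b2) * w2 + (a3 - b3) = 0" using assms(7) by (simp add: algebra_simps)
  hence "max (v (a1 - b1) * real q ^ na) (max (v (a2 - b2) * real q ^ nb) (v (a3 - b3))) = 0"
    using v_orth_comb[OF A_subset_Kinf[OF diff_in_A[OF assms(1,4)]] A_subset_Kinf[OF diff_in_A[OF assms(2,5)]] A_subset_Kinf[OF diff_in_A[OF assms(3,6)]]] by simp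
  hence "v (a1 - b1) * real q ^ na = 0" "v (a2 - b2) * real q ^ nb = 0" "v (a3 - b3) = 0"
    using v_nonneg[of "a1 - b1"] v_nonneg[of "a2 - b2"] v_nonneg[of "a3 - b3"] q_power_pos[of na] q_power_pos[of nb]
    by (smt (verit, best) mult_nonneg_nonneg)+
  thus ?thesis using q_power_pos[of na] q_power_pos[of nb] q_ge_2 by simp
qed

lemma v_lattice_comb: "a1 \<in> A \<Longrightarrow> a2 \<in> A \<Longrightarrow> a3 \<in> A \<Longrightarrow>
  v (a1 * w1 + a2 * w2 + a3) = max (v a1 * real q ^ na) (max (v a2 * real q ^ nb) (v a3))"
  by (rule v_orth_comb) (auto intro: A_subset_Kinf)

lemma zero_in_lattice: "0 \<in> \<Lambda>" unfolding lattice_iff using zero_in_A by (intro exI[of _ 0]) simp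

lemma add_in_lattice: assumes "x \<in> \<Lambda>" "y \<in> \<Lambda>" shows "x + y \<in> \<Lambda>"
proof -
  obtain a1 a2 a3 where a: "a1 \<in> A" "a2 \<in> A" "a3 \<in> A" "x = a1 * w1 + a2 * w2 + a3" using assms(1) lattice_iff by blast
  obtain b1 b2 b3 where b: "b1 \<in> A" "b2 \<in> A" "b3 \<in> A" "y = b1 * w1 + b2 * w2 + b3" using assms(2) lattice_iff by blast
  have "x + y = (a1 + b1) * w1 + (a2 + b2) * w2 + (a3 + b3)" using a b by (simp add: algebra_simps)
  thus ?thesis unfolding lattice_iff using a b add_in_A by blast
qed

lemma uminus_in_lattice: assumes "x \<in> \<Lambda>" shows "- x \<in> \<Lambda>"
proof -
  obtain a1 a2 a3 where a: "a1 \<in> A" "a2 \<in> A" "a3 \<in> A" "x = a1 * w1 + a2 * w2 + a3" using assms(1) lattice_iff by blast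
  have "- x = (- a1) * w1 + (- a2) * w2 + (- a3)" using a by (simp add: algebra_simps)
  thus ?thesis unfolding lattice_iff using a uminus_in_A by blast
qed

lemma scalar_in_lattice: assumes "c \<in> Fq" "x \<in> \<Lambda>" shows "c * x \<in> \<Lambda>"
proof -
  obtain a1 a2 a3 where a: "a1 \<in> A" "a2 \<in> A" "a3 \<in> A" "x = a1 * w1 + a2 * w2 + a3" using assms(2) lattice_iff by blast
  have "c * x = (c * a1) * w1 + (c * a2) * w2 + (c * a3)" using a by (simp add: algebra_simps)
  thus ?thesis unfolding lattice_iff using a scalar_in_A[OF assms(1)] by blast
qed

lemma v_lattice_power: assumes "l \<in> \<Lambda>" "l \<noteq> 0" shows "\<exists>k. v l = real q ^ k"
proof -
  obtain a1 a2 a3 where a: "a1 \<in> A" "a2 \<in> A" "a3 \<in> A" "l = a1 * w1 + a2 * w2 + a3" using assms(1) lattice_iff by blast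
  have pw: "\<exists>k. v x * real q ^ n = real q ^ k \<or> x = 0" if "x \<in> A" for x n
    using v_A_power[OF that] by (metis power_add)
  obtain k1 where k1: "v a1 * real q ^ na = real q ^ k1 \<or> a1 = 0" using pw[OF a(1)] by blast
  obtain k2 where k2: "v a2 * real q ^ nb = real q ^ k2 \<or> a2 = 0" using pw[OF a(2)] by blast
  obtain k3 where k3: "v a3 * real q ^ 0 = real q ^ k3 \<or> a3 = 0" using pw[OF a(3)] by blast
  have vl: "v l = max (v a1 * real q ^ na) (max (v a2 * real q ^ nb) (v a3))" using v_lattice_comb a by simp
  have "v l \<noteq> 0" using assms by simp
  thus ?thesis using vl k1 k2 k3 by (auto simp: max_def)
qed

lemma v_lattice_ge_1: "l \<in> \<Lambda> \<Longrightarrow> l \<noteq> 0 \<Longrightarrow> v l \<ge> 1"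
  using v_lattice_power q_power_ge_1 by metis

definition ball :: "real \<Rightarrow> 'k set" where "ball r = {l \<in> \<Lambda>. v l \<le> r}"

lemma finite_ball: "finite (ball r)"
proof -
  let ?S = "{x \<in> A. v x \<le> r}"
  have "ball r \<subseteq> (\<lambda>(a1,a2,a3). a1 * w1 + a2 * w2 + a3) ` (?S \<times> ?S \<times> ?S)"
  proof
    fix l assume "l \<in> ball r"
    then obtain a1 a2 a3 where a: "a1 \<in> A" "a2 \<in> A" "a3 \<in> A" "l = a1 * w1 + a2 * w2 + a3" "v l \<le> r"
      unfolding ball_def lattice_iff by blast
    have vl: "v l = max (v a1 * real q ^ na) (max (v a2 * real q ^ nb) (v a3))" using v_lattice_comb a by simp
    have "v a1 * 1 \<le> v a1 * real q ^ na" "v a2 * 1 \<le> v a2 * real q ^ nb"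
      by (intro mult_left_mono q_power_ge_1 v_nonneg)+
    hence "v a1 \<le> r" "v a2 \<le> r" "v a3 \<le> r" using vl a(5) by auto
    thus "l \<in> (\<lambda>(a1,a2,a3). a1 * w1 + a2 * w2 + a3) ` (?S \<times> ?S \<times> ?S)" using a by force
  qed
  thus ?thesis using A_ball_finite by (meson finite_SigmaI finite_imageI finite_subset)
qed

lemma ball_add_subgroup: "r \<ge> 0 \<Longrightarrow> finite_add_subgroup (ball r)"
  unfolding finite_add_subgroup_def ball_def using finite_ball zero_in_lattice add_in_lattice uminus_in_lattice v_add_le
  by (auto simp: ball_def intro: order_trans[OF v_add_le])

lemma ball_scalar_closed: "scalar_closed Fq (ball r)"
  unfolding scalar_closed_def ball_def
proof (intro ballI)
  fix c w assume c: "c \<in> Fq" and w: "w \<in> {l \<in> \<Lambda>. v l \<le> r}"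
  have "v (c * w) \<le> v w" using v_Fq_le_1[OF c] by (simp add: v_mult mult_left_le_one_le)
  thus "c * w \<in> {l \<in> \<Lambda>. v l \<le> r}" using w scalar_in_lattice[OF c] by auto
qed

definition torsion_pt :: "'k \<Rightarrow> 'k \<Rightarrow> 'k \<Rightarrow> 'k" where
  "torsion_pt c1 c2 c3 = (c1 * w1 + c2 * w2 + c3) / T"

text \<open>\<open>U3\<close>, the set of all \<open>torsion_pt c1 c2 c3\<close>, is a set of representatives of
\<open>T\<^sup>-\<^sup>1\<Lambda> / \<Lambda>\<close> (reduce each coordinate modulo \<open>T\<close>).  It is built by three steps
\<open>W \<mapsto> W + \<F>\<^sub>q y\<close> because the exponential maps it onto a set built the same way.\<close>

definition "U1 = add_line Fq {0} (w1 / T)"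
definition "U2 = add_line Fq U1 (w2 / T)"
definition "U3 = add_line Fq U2 (1 / T)"

lemma torsion_pt_step1: "c1 * (w1 / T) + 0 = torsion_pt c1 0 0" by (simp add: torsion_pt_def)
lemma torsion_pt_step2: "c2 * (w2 / T) + torsion_pt c1 0 0 = torsion_pt c1 c2 0" by (simp add: torsion_pt_def add_divide_distrib)
lemma torsion_pt_step3: "c3 * (1 / T) + torsion_pt c1 c2 0 = torsion_pt c1 c2 c3" by (simp add: torsion_pt_def add_divide_distrib)

lemma U1_iff: "u \<in> U1 \<longleftrightarrow> (\<exists>c1\<in>Fq. u = torsion_pt c1 0 0)"
  unfolding U1_def add_line_iff using torsion_pt_step1 by auto

lemma U2_iff: "u \<in> U2 \<longleftrightarrow> (\<exists>c1\<in>Fq. \<exists>c2\<in>Fq. u = torsion_pt c1 c2 0)"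
proof
  assume "u \<in> U2"
  then obtain c2 w where "c2 \<in> Fq" "w \<in> U1" "u = c2 * (w2 / T) + w" unfolding U2_def add_line_iff by blast
  moreover then obtain c1 where "c1 \<in> Fq" "w = torsion_pt c1 0 0" using U1_iff by blast
  ultimately show "\<exists>c1\<in>Fq. \<exists>c2\<in>Fq. u = torsion_pt c1 c2 0" using torsion_pt_step2 by metis
next
  assume "\<exists>c1\<in>Fq. \<exists>c2\<in>Fq. u = torsion_pt c1 c2 0"
  then obtain c1 c2 where c: "c1 \<in> Fq" "c2 \<in> Fq" "u = torsion_pt c1 c2 0" by blast
  hence "torsion_pt c1 0 0 \<in> U1" using U1_iff by blast
  thus "u \<in> U2" unfolding U2_def add_line_iff using c torsion_pt_step2 by metis
qed

lemma U3_iff: "u \<in> U3 \<longleftrightarrow> (\<exists>c1 c2 c3. c1 \<in> Fq \<and> c2 \<in> Fq \<and> c3 \<in> Fq \<and> u = torsion_pt c1 c2 c3)"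
proof
  assume "u \<in> U3"
  then obtain c3 w where "c3 \<in> Fq" "w \<in> U2" "u = c3 * (1 / T) + w" unfolding U3_def add_line_iff by blast
  moreover then obtain c1 c2 where "c1 \<in> Fq" "c2 \<in> Fq" "w = torsion_pt c1 c2 0" using U2_iff by blast
  ultimately show "\<exists>c1 c2 c3. c1 \<in> Fq \<and> c2 \<in> Fq \<and> c3 \<in> Fq \<and> u = torsion_pt c1 c2 c3" using torsion_pt_step3 by metis
next
  assume "\<exists>c1 c2 c3. c1 \<in> Fq \<and> c2 \<in> Fq \<and> c3 \<in> Fq \<and> u = torsion_pt c1 c2 c3"
  then obtain c1 c2 c3 where c: "c1 \<in> Fq" "c2 \<in> Fq" "c3 \<in> Fq" "u = torsion_pt c1 c2 c3" by blast
  hence "torsion_pt c1 c2 0 \<in> U2" using U2_iff by blast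
  thus "u \<in> U3" unfolding U3_def add_line_iff using c torsion_pt_step3 by metis
qed

lemma torsion_pt_in_U3: "c1 \<in> Fq \<Longrightarrow> c2 \<in> Fq \<Longrightarrow> c3 \<in> Fq \<Longrightarrow> torsion_pt c1 c2 c3 \<in> U3"
  unfolding U3_iff by blast

lemma U3_cases:
  assumes "u \<in> U3"
  obtains c1 c2 c3 where "c1 \<in> Fq" "c2 \<in> Fq" "c3 \<in> Fq" "u = torsion_pt c1 c2 c3"
  using assms unfolding U3_iff by blast

lemma torsion_pt_inj:
  assumes "c1 \<in> Fq" "c2 \<in> Fq" "c3 \<in> Fq" "d1 \<in> Fq" "d2 \<in> Fq" "d3 \<in> Fq"
    "torsion_pt c1 c2 c3 = torsion_pt d1 d2 d3"
  shows "c1 = d1 \<and> c2 = d2 \<and> c3 = d3"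
proof -
  have "c1 * w1 + c2 * w2 + c3 = d1 * w1 + d2 * w2 + d3" using assms(7) T_nonzero by (simp add: torsion_pt_def)
  thus ?thesis using lattice_coords_unique assms Fq_subset_A by blast
qed

lemma torsion_pt_eq: "torsion_pt c1 c2 c3 = (c1 / T) * w1 + (c2 / T) * w2 + c3 / T"
  unfolding torsion_pt_def by (simp add: add_divide_distrib)

lemma Fq_div_T_in_Kinf: "c \<in> Fq \<Longrightarrow> c / T \<in> K_inf"
  using A_minus_Fq_div_T_in_Kinf[OF zero_in_A uminus_in_F] by (metis diff_0 minus_divide_left minus_minus)

lemma v_Fq_div_T: "c \<in> Fq \<Longrightarrow> v (c / T) = v c / real q"
  by (simp add: v_divide v_T)

lemma v_A_minus_Fq_div_T: assumes "a \<in> A" "c \<in> Fq" shows "v (a - c / T) = max (v a) (v c / real q)"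
proof (cases "a = 0")
  case True thus ?thesis using v_Fq_div_T[OF assms(2)] by simp
next
  case False
  have "v (c / T) \<le> 1 / real q" using v_Fq_div_T[OF assms(2)] v_Fq_le_1[OF assms(2)] q_gt_1 by (simp add: divide_right_mono)
  also have "\<dots> < 1" using q_gt_1 by simp
  also have "1 \<le> v a" using v_A_ge_1[OF assms(1) False] .
  finally have lt: "v (c / T) < v a" .
  hence "v (a - c / T) = v a" by (rule v_diff_eq_left)
  thus ?thesis using lt v_Fq_div_T[OF assms(2)] by simp
qed

lemma v_torsion_pt: assumes "c1 \<in> Fq" "c2 \<in> Fq" "c3 \<in> Fq"
  shows "v (torsion_pt c1 c2 c3) = max (v c1 * real q ^ na) (max (v c2 * real q ^ nb) (v c3)) / real q"
proof -
  have "v (torsion_pt c1 c2 c3) = max (v (c1/T) * real q ^ na) (max (v (c2/T) * real q ^ nb) (v (c3/T)))"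
    unfolding torsion_pt_eq by (rule v_orth_comb) (use Fq_div_T_in_Kinf assms in auto)
  also have "\<dots> = max (v c1 * real q ^ na) (max (v c2 * real q ^ nb) (v c3)) / real q"
    using q_gt_1 by (simp add: v_Fq_div_T[OF assms(1)] v_Fq_div_T[OF assms(2)] v_Fq_div_T[OF assms(3)] max_divide_distrib_right)
  finally show ?thesis .
qed

lemma v_lattice_minus_U3:
  assumes l: "l \<in> \<Lambda>" and u: "u \<in> U3"
  shows "v (l - u) = max (v l) (v u)"
proof -
  obtain a1 a2 a3 where a: "a1 \<in> A" "a2 \<in> A" "a3 \<in> A" "l = a1 * w1 + a2 * w2 + a3" using l lattice_iff by blast
  obtain c1 c2 c3 where c: "c1 \<in> Fq" "c2 \<in> Fq" "c3 \<in> Fq" "u = torsion_pt c1 c2 c3" using u by (rule U3_cases)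
  have "l - u = (a1 - c1 / T) * w1 + (a2 - c2 / T) * w2 + (a3 - c3 / T)"
    using a c by (simp add: torsion_pt_eq algebra_simps)
  hence "v (l - u) = v ((a1 - c1 / T) * w1 + (a2 - c2 / T) * w2 + (a3 - c3 / T))" by simp
  also have "\<dots> = max (v (a1 - c1 / T) * real q ^ na) (max (v (a2 - c2 / T) * real q ^ nb) (v (a3 - c3 / T)))"
    by (rule v_orth_comb) (use A_minus_Fq_div_T_in_Kinf a c in auto)
  also have "\<dots> = max (max (v a1 * real q ^ na) (v c1 / real q * real q ^ na))
      (max (max (v a2 * real q ^ nb) (v c2 / real q * real q ^ nb)) (max (v a3) (v c3 / real q)))"
    using a c q_power_pos by (simp add: v_A_minus_Fq_div_T max_mult_distrib_right less_imp_le)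
  also have "\<dots> = max (max (v a1 * real q ^ na) (max (v a2 * real q ^ nb) (v a3)))
     (max (v c1 / real q * real q ^ na) (max (v c2 / real q * real q ^ nb) (v c3 / real q)))"
    by (simp add: max.assoc max.left_commute max.commute)
  also have "max (v a1 * real q ^ na) (max (v a2 * real q ^ nb) (v a3)) = v l" using v_lattice_comb a by simp
  also have "max (v c1 / real q * real q ^ na) (max (v c2 / real q * real q ^ nb) (v c3 / real q)) = v u"
    using c q_gt_1 by (simp add: v_torsion_pt max_divide_distrib_right)
  finally show ?thesis .
qed

lemma not_in_U_chain: "w1 / T \<notin> {0}" "w2 / T \<notin> U1" "1 / T \<notin> U2"
proof -
  have "w1 \<noteq> 0" using v_w1 q_power_pos[of na] by auto
  thus "w1 / T \<notin> {0}" using T_nonzero by simp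
  show "w2 / T \<notin> U1"
  proof
    assume "w2 / T \<in> U1"
    then obtain c where "c \<in> Fq" "w2 / T = torsion_pt c 0 0" using U1_iff by blast
    moreover have "w2 / T = torsion_pt 0 1 0" by (simp add: torsion_pt_def)
    ultimately show False using torsion_pt_inj[of 0 1 0 c 0 0] zero_in_F one_in_F by auto
  qed
  show "1 / T \<notin> U2"
  proof
    assume "1 / T \<in> U2"
    then obtain c d where "c \<in> Fq" "d \<in> Fq" "1 / T = torsion_pt c d 0" using U2_iff by blast
    moreover have "1 / T = torsion_pt 0 0 1" by (simp add: torsion_pt_def)
    ultimately show False using torsion_pt_inj[of 0 0 1 c d 0] zero_in_F one_in_F by auto
  qed
qed

lemma U3_subspace: "finite_add_subgroup U3" "card U3 = q ^ 3"
proof -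
  note U1 = add_line_subspace[OF finite_add_subgroup_0 scalar_closed_0 not_in_U_chain(1), folded U1_def]
  note U2 = add_line_subspace[OF U1(1,2) not_in_U_chain(2), folded U2_def]
  note U3 = add_line_subspace[OF U2(1,2) not_in_U_chain(3), folded U3_def]
  show "finite_add_subgroup U3" by (rule U3(1))
  show "card U3 = q ^ 3" using U1(3) U2(3) U3(3) card_Fq by (simp add: power3_eq_cube)
qed

lemma U_subsets: "U1 \<subseteq> U3" "U2 \<subseteq> U3" "w1 / T \<in> U3" "w2 / T \<in> U3" "1 / T \<in> U3"
proof -
  show "U1 \<subseteq> U3" "U2 \<subseteq> U3" using zero_in_F by (auto simp: U1_iff U2_iff intro: torsion_pt_in_U3)
  have "w1 / T = torsion_pt 1 0 0" "w2 / T = torsion_pt 0 1 0" "1 / T = torsion_pt 0 0 1"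
    by (simp_all add: torsion_pt_def)
  thus "w1 / T \<in> U3" "w2 / T \<in> U3" "1 / T \<in> U3" using torsion_pt_in_U3 zero_in_F one_in_F by simp_all
qed

lemma U3_finite: "finite U3" "0 \<in> U3" using U3_subspace(1) by (auto simp: finite_add_subgroup_def)

lemma v_add_T_mult_ge: assumes "c \<in> Fq" "b \<in> A" shows "real q * v b \<le> v (c + T * b)"
  using v_add_T_mult[OF assms] by (cases "b = 0") auto

lemma v_add_T_mult_scaled_le:
  assumes "c \<in> Fq" "b \<in> A" "k \<le> r" "real q * (v b * k) \<le> r" "k \<ge> 0"
  shows "v (c + T * b) * k \<le> r"
proof (cases "b = 0")
  case True
  have "v c * k \<le> 1 * k" using v_Fq_le_1[OF assms(1)] assms(5) by (intro mult_right_mono) auto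
  thus ?thesis using True assms(3) by simp
next
  case False
  thus ?thesis using v_add_T_mult[OF assms(1,2) False] assms(4) by (simp add: mult.assoc)
qed

lemma q_power_nb_le_na: "real q ^ nb \<le> real q ^ na" using nb_le_na q_gt_1 by (simp add: power_increasing)

lemma T_mult_torsion_pt_add:
  "T * (torsion_pt c1 c2 c3 + (b1 * w1 + b2 * w2 + b3)) = (c1 + T * b1) * w1 + (c2 + T * b2) * w2 + (c3 + T * b3)"
  unfolding torsion_pt_def using T_nonzero by (simp add: field_simps)

lemma lattice_div_T_decomp:
  assumes "x \<in> \<Lambda>"
  obtains u w where "u \<in> U3" "w \<in> \<Lambda>" "x = T * (u + w)"
proof -
  obtain a1 a2 a3 where a: "a1 \<in> A" "a2 \<in> A" "a3 \<in> A" "x = a1 * w1 + a2 * w2 + a3"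
    using assms unfolding lattice_iff by blast
  obtain c1 b1 where 1: "c1 \<in> Fq" "b1 \<in> A" "a1 = c1 + T * b1" using A_T_adic_decomp[OF a(1)] by blast
  obtain c2 b2 where 2: "c2 \<in> Fq" "b2 \<in> A" "a2 = c2 + T * b2" using A_T_adic_decomp[OF a(2)] by blast
  obtain c3 b3 where 3: "c3 \<in> Fq" "b3 \<in> A" "a3 = c3 + T * b3" using A_T_adic_decomp[OF a(3)] by blast
  show ?thesis
  proof
    show "torsion_pt c1 c2 c3 \<in> U3" by (rule torsion_pt_in_U3[OF 1(1) 2(1) 3(1)])
    show "b1 * w1 + b2 * w2 + b3 \<in> \<Lambda>" unfolding lattice_iff using 1 2 3 by blast
    show "x = T * (torsion_pt c1 c2 c3 + (b1 * w1 + b2 * w2 + b3))"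
      unfolding T_mult_torsion_pt_add using a 1 2 3 by simp
  qed
qed

lemma T_mult_U3_add_lattice:
  assumes u: "u \<in> U3" and w: "w \<in> \<Lambda>"
  shows "T * (u + w) \<in> \<Lambda>" and "real q * v w \<le> v (T * (u + w))"
    and "v (T * (u + w)) \<le> max (real q ^ na) (real q * v w)"
proof -
  obtain c1 c2 c3 where c: "c1 \<in> Fq" "c2 \<in> Fq" "c3 \<in> Fq" "u = torsion_pt c1 c2 c3" using u by (rule U3_cases)
  obtain b1 b2 b3 where b: "b1 \<in> A" "b2 \<in> A" "b3 \<in> A" "w = b1 * w1 + b2 * w2 + b3"
    using w unfolding lattice_iff by blast
  note a = add_T_mult_in_A[OF c(1) b(1)] add_T_mult_in_A[OF c(2) b(2)] add_T_mult_in_A[OF c(3) b(3)]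
  have x: "T * (u + w) = (c1 + T * b1) * w1 + (c2 + T * b2) * w2 + (c3 + T * b3)"
    using T_mult_torsion_pt_add c b by simp
  show "T * (u + w) \<in> \<Lambda>" unfolding x lattice_iff using a by blast
  have vx: "v (T * (u + w))
      = max (v (c1 + T * b1) * real q ^ na) (max (v (c2 + T * b2) * real q ^ nb) (v (c3 + T * b3)))"
    unfolding x by (rule v_lattice_comb[OF a])
  have vw: "v w = max (v b1 * real q ^ na) (max (v b2 * real q ^ nb) (v b3))"
    using v_lattice_comb b by simp
  have "real q * v w = max (real q * v b1 * real q ^ na) (max (real q * v b2 * real q ^ nb) (real q * v b3))"
    unfolding vw by (simp add: max_mult_distrib_left mult.assoc)
  also have "\<dots> \<le> v (T * (u + w))"
    unfolding vx using v_add_T_mult_ge[OF c(1) b(1)] v_add_T_mult_ge[OF c(2) b(2)] v_add_T_mult_ge[OF c(3) b(3)]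
    by (intro max.mono mult_right_mono) auto
  finally show "real q * v w \<le> v (T * (u + w))" .
  define M where "M = max (real q ^ na) (real q * v w)"
  have qw: "real q * (v b1 * real q ^ na) \<le> M" "real q * (v b2 * real q ^ nb) \<le> M" "real q * (v b3 * 1) \<le> M"
    unfolding M_def vw by (auto simp: max_mult_distrib_left mult.assoc intro: le_max_iff_disj[THEN iffD2])
  have "real q ^ na \<le> M" "real q ^ nb \<le> M" "1 \<le> M"
    using q_power_nb_le_na q_power_ge_1[of na] by (auto simp: M_def)
  hence "v (c1 + T * b1) * real q ^ na \<le> M" "v (c2 + T * b2) * real q ^ nb \<le> M" "v (c3 + T * b3) * 1 \<le> M"
    using qw by (intro v_add_T_mult_scaled_le c b; simp)+
  thus "v (T * (u + w)) \<le> max (real q ^ na) (real q * v w)" unfolding vx M_def[symmetric] by simp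
qed

lemma sum_U3_lattice_inj: "inj_on (\<lambda>(u,w). u + w) (U3 \<times> \<Lambda>)"
proof (rule inj_onI, clarify)
  fix u w u' w' assume u: "u \<in> U3" "w \<in> \<Lambda>" "u' \<in> U3" "w' \<in> \<Lambda>" "u + w = u' + w'"
  obtain c1 c2 c3 where c: "c1 \<in> Fq" "c2 \<in> Fq" "c3 \<in> Fq" "u = torsion_pt c1 c2 c3" using u(1) by (rule U3_cases)
  obtain d1 d2 d3 where d: "d1 \<in> Fq" "d2 \<in> Fq" "d3 \<in> Fq" "u' = torsion_pt d1 d2 d3" using u(3) by (rule U3_cases)
  obtain b1 b2 b3 where b: "b1 \<in> A" "b2 \<in> A" "b3 \<in> A" "w = b1 * w1 + b2 * w2 + b3"
    using u(2) unfolding lattice_iff by blast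
  obtain e1 e2 e3 where e: "e1 \<in> A" "e2 \<in> A" "e3 \<in> A" "w' = e1 * w1 + e2 * w2 + e3"
    using u(4) unfolding lattice_iff by blast
  have "(c1 + T * b1) * w1 + (c2 + T * b2) * w2 + (c3 + T * b3)
      = (d1 + T * e1) * w1 + (d2 + T * e2) * w2 + (d3 + T * e3)"
    using u(5) T_mult_torsion_pt_add[of c1 c2 c3 b1 b2 b3] T_mult_torsion_pt_add[of d1 d2 d3 e1 e2 e3] c d b e by simp
  hence "c1 + T * b1 = d1 + T * e1 \<and> c2 + T * b2 = d2 + T * e2 \<and> c3 + T * b3 = d3 + T * e3"
    by (intro lattice_coords_unique add_T_mult_in_A b c d e)
  hence "c1 = d1 \<and> b1 = e1" "c2 = d2 \<and> b2 = e2" "c3 = d3 \<and> b3 = e3"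
    using T_adic_decomp_unique[OF c(1) b(1) d(1) e(1)] T_adic_decomp_unique[OF c(2) b(2) d(2) e(2)]
      T_adic_decomp_unique[OF c(3) b(3) d(3) e(3)] by simp_all
  thus "u = u' \<and> w = w'" using c d b e by simp
qed

lemma ball_mono: "r \<le> r' \<Longrightarrow> ball r \<subseteq> ball r'" unfolding ball_def by auto

lemma ball_div_T_decomp:
  assumes r: "r \<ge> real q ^ Suc na"
  shows "(\<lambda>x. x / T) ` ball r = (\<lambda>(u,w). u + w) ` (U3 \<times> ball (r / real q))"
proof
  show "(\<lambda>x. x / T) ` ball r \<subseteq> (\<lambda>(u,w). u + w) ` (U3 \<times> ball (r / real q))"
  proof clarify
    fix x assume "x \<in> ball r"
    then obtain u w where uw: "u \<in> U3" "w \<in> \<Lambda>" "x = T * (u + w)" "v x \<le> r"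
      unfolding ball_def by (auto elim: lattice_div_T_decomp)
    hence "real q * v w \<le> r" using T_mult_U3_add_lattice(2)[of u w] by simp
    hence "w \<in> ball (r / real q)" using uw(2) q_gt_1 by (simp add: ball_def field_simps)
    moreover have "x / T = u + w" using uw(3) T_nonzero by simp
    ultimately show "x / T \<in> (\<lambda>(u,w). u + w) ` (U3 \<times> ball (r / real q))" using uw(1) by force
  qed
  show "(\<lambda>(u,w). u + w) ` (U3 \<times> ball (r / real q)) \<subseteq> (\<lambda>x. x / T) ` ball r"
  proof clarify
    fix u w assume u: "u \<in> U3" and w: "w \<in> ball (r / real q)"
    have "real q ^ na \<le> r" using r q_gt_1 by (smt (verit) power_increasing_iff lessI less_imp_le)
    moreover have "real q * v w \<le> r" using w q_gt_1 by (simp add: ball_def field_simps)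
    ultimately have "T * (u + w) \<in> ball r"
      using T_mult_U3_add_lattice[OF u] w by (force simp: ball_def)
    moreover have "u + w = T * (u + w) / T" using T_nonzero by simp
    ultimately show "u + w \<in> (\<lambda>x. x / T) ` ball r" by blast
  qed
qed

section \<open>The lattice exponential\<close>

definition part_prod :: "real \<Rightarrow> 'k \<Rightarrow> 'k" where "part_prod r z = (\<Prod>l\<in>ball r - {0}. (1 - z / l))"

lemma fin_exp_ball: "fin_exp (ball r) z = z * part_prod r z" unfolding fin_exp_def part_prod_def by simp

lemma ball_nat: "{l \<in> \<Lambda>. l \<noteq> 0 \<and> v l \<le> real n} = ball (real n) - {0}" unfolding ball_def by auto

lemma part_prod_split:
  assumes "r \<le> r'" "0 \<le> r"
  shows "part_prod r' z = part_prod r z * (\<Prod>l\<in>ball r' - ball r. (1 - z / l))"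
proof -
  have "ball r' - {0} = (ball r - {0}) \<union> (ball r' - ball r)" using ball_mono[OF assms(1)] ball_def zero_in_lattice assms by auto
  moreover have "(ball r - {0}) \<inter> (ball r' - ball r) = {}" by auto
  ultimately show ?thesis unfolding part_prod_def using finite_ball by (simp add: prod.union_disjoint)
qed

lemma v_new_factor:
  assumes "r \<le> r'" "r > 0" "l \<in> ball r' - ball r"
  shows "v (1 - z / l) \<le> max 1 (v z / r)" "v ((1 - z / l) - 1) \<le> v z / r"
    and "v z \<le> r \<Longrightarrow> v (1 - z / l) = 1"
proof -
  have vl: "v l > r" "l \<noteq> 0" using assms by (auto simp: ball_def)
  have vzl: "v (z / l) \<le> v z / r" using vl assms(2) by (simp add: v_divide frac_le)
  show "v ((1 - z / l) - 1) \<le> v z / r" using vzl by simp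
  show "v (1 - z / l) \<le> max 1 (v z / r)" using v_diff_le[of 1 "z / l"] vzl by simp
  assume "v z \<le> r"
  hence "v (z / l) < 1" using vl v_pos[OF vl(2)] by (simp add: v_divide divide_less_eq)
  thus "v (1 - z / l) = 1" using v_diff_eq_left[of "z / l" 1] by simp
qed

lemma v_part_prod_stable:
  assumes "v z \<le> r" "r \<le> r'" "r > 0"
  shows "v (part_prod r' z) = v (part_prod r z)"
proof -
  have "v (\<Prod>l\<in>ball r' - ball r. (1 - z / l)) = (\<Prod>l\<in>ball r' - ball r. v (1 - z / l))" by (rule v_prod)
  also have "\<dots> = 1" using v_new_factor(3)[OF assms(2,3) _ assms(1)] by simp
  finally show ?thesis using part_prod_split[OF assms(2) less_imp_le[OF assms(3)]] by (simp add: v_mult)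
qed

lemma v_part_prod_diff_le:
  assumes "v z \<le> r" "r \<le> r'" "r > 0"
  shows "v (part_prod r' z - part_prod r z) \<le> v (part_prod r z) * (v z / r)"
proof -
  have "part_prod r' z - part_prod r z = part_prod r z * ((\<Prod>l\<in>ball r' - ball r. (1 - z / l)) - 1)"
    using part_prod_split[OF assms(2) less_imp_le[OF assms(3)]] by (simp add: algebra_simps)
  hence "v (part_prod r' z - part_prod r z) = v (part_prod r z) * v ((\<Prod>l\<in>ball r' - ball r. (1 - z / l)) - 1)" by (simp add: v_mult)
  also have "\<dots> \<le> v (part_prod r z) * (v z / r)"
    using assms by (intro mult_left_mono v_prod_minus_1_le v_new_factor(2)) (auto simp: finite_ball)
  finally show ?thesis .
qed

definition lexp :: "'k \<Rightarrow> 'k" where "lexp z = expo v \<Lambda> z"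

lemma part_prod_converges: "\<exists>L. tends_abs v (\<lambda>n. part_prod (real n) z) L \<and> tends_real (\<lambda>r. part_prod r z) L"
proof -
  define R where "R = v z + 1"
  have R: "R > 0" "v z \<le> R" by (auto simp: R_def add_nonneg_pos)
  define C where "C = v (part_prod R z) * v z"
  have bnd: "v (part_prod r' z - part_prod r z) \<le> C / r" if "R \<le> r" "r \<le> r'" for r r'
  proof -
    have "v (part_prod r z) = v (part_prod R z)" using v_part_prod_stable[OF R(2) that(1) R(1)] .
    thus ?thesis using v_part_prod_diff_le[of z r r'] that R by (simp add: C_def)
  qed
  obtain L where "tends_abs v (\<lambda>n. part_prod (real n) z) L"
    using tends_abs_of_bounded_increments[OF complete R(1) bnd] by blast
  moreover have "tends_real (\<lambda>r. part_prod r z) L"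
    by (rule tends_real_of_bounded_increments[OF R(1) _ bnd calculation]) (simp add: C_def)
  ultimately show ?thesis by blast
qed

lemma lexp_limit: "tends_real (\<lambda>r. fin_exp (ball r) z) (lexp z)"
proof -
  obtain L where L: "tends_abs v (\<lambda>n. part_prod (real n) z) L" "tends_real (\<lambda>r. part_prod r z) L" using part_prod_converges by blast
  have "(THE P. tends_abs v (\<lambda>n. \<Prod>l\<in>{l \<in> \<Lambda>. l \<noteq> 0 \<and> v l \<le> real n}. (1 - z / l)) P) = L"
    unfolding ball_nat part_prod_def[symmetric] using L(1) tends_abs_unique by blast
  hence "lexp z = z * L" unfolding lexp_def expo_def by simp
  thus ?thesis unfolding fin_exp_ball using tends_real_mult[OF tends_real_const L(2)] by simp
qed

lemma lexp_limit_unique: "tends_real (\<lambda>r. fin_exp (ball r) z) L \<Longrightarrow> L = lexp z"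
  using tends_real_unique lexp_limit by blast

lemma lexp_add: "lexp (x + y) = lexp x + lexp y"
proof -
  have "tends_real (\<lambda>r. fin_exp (ball r) x + fin_exp (ball r) y) (lexp x + lexp y)" by (rule tends_real_add[OF lexp_limit lexp_limit])
  hence "tends_real (\<lambda>r. fin_exp (ball r) (x + y)) (lexp x + lexp y)"
    by (rule tends_real_cong[where R=0]) (simp add: fin_exp_add[OF ball_add_subgroup])
  thus ?thesis using lexp_limit_unique by simp
qed

lemma lexp_diff: "lexp (x - y) = lexp x - lexp y"
  using lexp_add[of "x - y" y] by simp

lemma lexp_scalar: assumes "c \<in> Fq" shows "lexp (c * x) = c * lexp x"
proof -
  have "tends_real (\<lambda>r. c * fin_exp (ball r) x) (c * lexp x)" by (rule tends_real_mult[OF tends_real_const lexp_limit])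
  hence "tends_real (\<lambda>r. fin_exp (ball r) (c * x)) (c * lexp x)"
    by (simp add: fin_exp_scalar[OF subfield ball_scalar_closed assms])
  thus ?thesis using lexp_limit_unique by simp
qed

lemma v_lexp_eventually: "(\<And>r. r \<ge> R \<Longrightarrow> v (fin_exp (ball r) z) = C) \<Longrightarrow> v (lexp z) = C"
  using tends_real_v_eventually[OF lexp_limit] by blast

lemma v_lexp_small: assumes "v z < 1" shows "v (lexp z) = v z"
proof (rule v_lexp_eventually)
  fix r :: real assume "r \<ge> 1"
  have "v (part_prod r z) = (\<Prod>l\<in>ball r - {0}. v (1 - z / l))" unfolding part_prod_def by (rule v_prod)
  also have "\<dots> = 1"
  proof (rule prod.neutral, rule ballI)
    fix l assume l: "l \<in> ball r - {0}"
    hence "v l \<ge> 1" "l \<noteq> 0" using v_lattice_ge_1 by (auto simp: ball_def)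
    hence "v (z / l) < 1" using assms by (simp add: v_divide divide_less_eq)
    thus "v (1 - z / l) = 1" using v_diff_eq_left[of "z / l" 1] by simp
  qed
  finally show "v (fin_exp (ball r) z) = v z" by (simp add: fin_exp_ball v_mult)
qed

section \<open>The functional equation and \<open>\<Delta>\<close>\<close>

lemma fin_exp_ball_scale_T:
  assumes "r \<ge> 0"
  shows "fin_exp (ball r) (T * z) = T * fin_exp ((\<lambda>x. x / T) ` ball r) z"
proof -
  have inj: "inj_on (\<lambda>x. x / T) (ball r - {0})" using T_nonzero by (auto simp: inj_on_def)
  have img: "(\<lambda>x. x / T) ` ball r - {0} = (\<lambda>x. x / T) ` (ball r - {0})" using T_nonzero by auto
  have "(\<Prod>x\<in>(\<lambda>x. x / T) ` ball r - {0}. (1 - z / x)) = (\<Prod>l\<in>ball r - {0}. (1 - z / (l / T)))"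
    unfolding img by (rule prod.reindex_cong[OF inj]) auto
  also have "\<dots> = (\<Prod>l\<in>ball r - {0}. (1 - T * z / l))"
    by (intro prod.cong refl) (simp add: field_simps)
  finally show ?thesis unfolding fin_exp_def by (simp add: mult.assoc)
qed

lemma fin_exp_ball_functional_eq:
  assumes r: "r \<ge> real q ^ Suc na"
  shows "fin_exp (ball r) (T * z) = T * (fin_exp (ball (r / real q)) z *
           (\<Prod>u\<in>U3-{0}. (1 - fin_exp (ball (r / real q)) z / fin_exp (ball (r / real q)) u)))"
proof -
  have r0: "r \<ge> 0" using r q_power_pos[of "Suc na"] by linarith
  have "fin_exp ((\<lambda>x. x / T) ` ball r) z = fin_exp (ball (r / real q)) z *
           (\<Prod>u\<in>U3-{0}. (1 - fin_exp (ball (r / real q)) z / fin_exp (ball (r / real q)) u))"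
  proof (rule fin_exp_direct_sum[OF ball_add_subgroup U3_finite _ ball_div_T_decomp[OF r]])
    show "inj_on (\<lambda>(u, w). u + w) (U3 \<times> ball (r / real q))"
      by (rule inj_on_subset[OF sum_U3_lattice_inj]) (auto simp: ball_def)
  qed (use r0 in simp)
  thus ?thesis using fin_exp_ball_scale_T[OF r0] by simp
qed

lemma v_one_minus_div: assumes "l \<in> \<Lambda>" "l \<noteq> 0" "u \<in> U3"
  shows "v (1 - u / l) = max (v l) (v u) / v l"
proof -
  have "1 - u / l = (l - u) / l" using assms(2) by (simp add: field_simps)
  thus ?thesis using v_lattice_minus_U3[OF assms(1,3)] by (simp add: v_divide)
qed

definition short_vectors :: "real \<Rightarrow> 'k set" where "short_vectors rho = {l \<in> \<Lambda>. l \<noteq> 0 \<and> v l < rho}"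

lemma v_fin_exp_U3:
  assumes u: "u \<in> U3" and r: "r \<ge> v u"
  shows "v (fin_exp (ball r) u) = v u * (\<Prod>l\<in>short_vectors (v u). v u / v l)"
proof -
  have "v (fin_exp (ball r) u) = v u * (\<Prod>l\<in>ball r - {0}. v (1 - u / l))"
    unfolding fin_exp_def by (simp add: v_mult v_prod)
  also have "(\<Prod>l\<in>ball r - {0}. v (1 - u / l)) = (\<Prod>l\<in>ball r - {0}. max (v l) (v u) / v l)"
    by (intro prod.cong refl) (use v_one_minus_div u in \<open>auto simp: ball_def\<close>)
  also have "\<dots> = (\<Prod>l\<in>short_vectors (v u). max (v l) (v u) / v l)"
  proof (rule prod.mono_neutral_right)
    show "finite (ball r - {0})" using finite_ball by simp
    show "short_vectors (v u) \<subseteq> ball r - {0}" using r by (auto simp: short_vectors_def ball_def)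
    show "\<forall>l\<in>ball r - {0} - short_vectors (v u). max (v l) (v u) / v l = 1"
      by (auto simp: short_vectors_def ball_def max_def)
  qed
  also have "\<dots> = (\<Prod>l\<in>short_vectors (v u). v u / v l)"
    by (intro prod.cong refl) (auto simp: short_vectors_def max_def)
  finally show ?thesis .
qed

lemma v_lexp_U3:
  assumes u: "u \<in> U3"
  shows "v (lexp u) = v u * (\<Prod>l\<in>short_vectors (v u). v u / v l)"
  by (rule v_lexp_eventually[of "v u"]) (rule v_fin_exp_U3[OF u])

lemma lexp_U3_nonzero: assumes "u \<in> U3" "u \<noteq> 0" shows "lexp u \<noteq> 0"
proof -
  have "v u > 0" using assms v_pos by simp
  moreover have "(\<Prod>l\<in>short_vectors (v u). v u / v l) > 0"
    using \<open>v u > 0\<close> by (intro prod_pos) (auto simp: short_vectors_def v_lattice_ge_1 v_pos)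
  ultimately have "v (lexp u) > 0" using v_lexp_U3[OF assms(1)] by simp
  thus ?thesis by auto
qed

lemma lexp_functional_eq: "lexp (T * z) = T * (lexp z * (\<Prod>u\<in>U3-{0}. (1 - lexp z / lexp u)))"
proof -
  have q0: "real q > 0" using q_gt_1 by simp
  have cz: "tends_real (\<lambda>r. fin_exp (ball (r / real q)) z) (lexp z)" by (rule tends_real_rescale[OF lexp_limit q0])
  have cu: "tends_real (\<lambda>r. fin_exp (ball (r / real q)) u) (lexp u)" for u by (rule tends_real_rescale[OF lexp_limit q0])
  have "tends_real (\<lambda>r. T * (fin_exp (ball (r / real q)) z * (\<Prod>u\<in>U3-{0}. (1 - fin_exp (ball (r / real q)) z / fin_exp (ball (r / real q)) u))))
      (T * (lexp z * (\<Prod>u\<in>U3-{0}. (1 - lexp z / lexp u))))"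
    by (intro tends_real_mult tends_real_const cz tends_real_prod tends_real_diff tends_real_divide cu) (use U3_finite lexp_U3_nonzero in auto)
  hence "tends_real (\<lambda>r. fin_exp (ball r) (T * z)) (T * (lexp z * (\<Prod>u\<in>U3-{0}. (1 - lexp z / lexp u))))"
    by (rule tends_real_cong[where R="real q ^ Suc na"]) (simp add: fin_exp_ball_functional_eq)
  thus ?thesis using lexp_limit_unique by simp
qed

lemma lexp_0: "lexp 0 = 0" using lexp_scalar[OF zero_in_F, of 0] by simp

lemma lexp_add_line: "lexp ` add_line Fq W y = add_line Fq (lexp ` W) (lexp y)"
  using image_add_line lexp_add lexp_scalar by blast

lemma diff_in_U3: "x \<in> U3 \<Longrightarrow> y \<in> U3 \<Longrightarrow> x - y \<in> U3"
  using U3_subspace(1) unfolding finite_add_subgroup_def by (metis diff_conv_add_uminus)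

lemma inj_on_lexp_U3: "inj_on lexp U3"
proof (rule inj_onI)
  fix x y assume xy: "x \<in> U3" "y \<in> U3" "lexp x = lexp y"
  hence "lexp (x - y) = 0" by (simp add: lexp_diff)
  thus "x = y" using lexp_U3_nonzero[OF diff_in_U3[OF xy(1,2)]] by auto
qed

lemma lexp_notin_image: assumes "y \<in> U3" "W \<subseteq> U3" "y \<notin> W" shows "lexp y \<notin> lexp ` W"
  using assms inj_on_lexp_U3 by (auto simp: inj_on_def)

definition "Y1 = lexp ` U1"
definition "Y2 = lexp ` U2"
definition "Y3 = lexp ` U3"

lemma Y_chain:
  "Y1 = add_line Fq {0} (lexp (w1 / T))" "Y2 = add_line Fq Y1 (lexp (w2 / T))" "Y3 = add_line Fq Y2 (lexp (1 / T))"
  unfolding Y1_def Y2_def Y3_def U1_def U2_def U3_def by (simp_all add: lexp_add_line lexp_0)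

lemma Y3_props:
  shows "finite_add_subgroup Y3" "card Y3 = q ^ 3"
    and "\<exists>a. (\<forall>X. fin_exp Y3 X = (\<Sum>i\<le>3. a i * X ^ (q ^ i))) \<and> a 0 = 1"
proof -
  note Y0 = finite_add_subgroup_0 scalar_closed_0
  have n1: "lexp (w1 / T) \<notin> {0}" using lexp_U3_nonzero U_subsets not_in_U_chain(1) by auto
  have n2: "lexp (w2 / T) \<notin> Y1" unfolding Y1_def
    by (rule lexp_notin_image) (use U_subsets not_in_U_chain in auto)
  have n3: "lexp (1 / T) \<notin> Y2" unfolding Y2_def
    by (rule lexp_notin_image) (use U_subsets not_in_U_chain in auto)
  note Y1 = add_line_subspace[OF Y0 n1, folded Y_chain(1)]
  note Y2 = add_line_subspace[OF Y1(1,2) n2, folded Y_chain(2)]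
  note Y3 = add_line_subspace[OF Y2(1,2) n3, folded Y_chain(3)]
  show "finite_add_subgroup Y3" by (rule Y3(1))
  show "card Y3 = q ^ 3" using Y1(3) Y2(3) Y3(3) card_Fq by (simp add: power3_eq_cube)
  have "\<forall>X. fin_exp {0} X = (\<Sum>i\<le>0. (\<lambda>_. 1) i * X ^ (card Fq ^ i))" by (simp add: fin_exp_def)
  from fin_exp_add_line_q_poly[OF Y0 n1 this, folded Y_chain(1)] obtain a1 where
    a1: "\<forall>X. fin_exp Y1 X = (\<Sum>i\<le>Suc 0. a1 i * X ^ (card Fq ^ i))" "a1 0 = 1" by blast
  from fin_exp_add_line_q_poly[OF Y1(1,2) n2 a1(1), folded Y_chain(2)] obtain a2 where
    a2: "\<forall>X. fin_exp Y2 X = (\<Sum>i\<le>Suc (Suc 0). a2 i * X ^ (card Fq ^ i))" "a2 0 = a1 0" by blast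
  from fin_exp_add_line_q_poly[OF Y2(1,2) n3 a2(1), folded Y_chain(3)] obtain a3 where
    "\<forall>X. fin_exp Y3 X = (\<Sum>i\<le>3. a3 i * X ^ (q ^ i))" "a3 0 = a2 0"
    unfolding card_Fq numeral_3_eq_3 by blast
  thus "\<exists>a. (\<forall>X. fin_exp Y3 X = (\<Sum>i\<le>3. a i * X ^ (q ^ i))) \<and> a 0 = 1"
    using a1 a2 by auto
qed

lemma Y3_minus_0: "Y3 - {0} = lexp ` (U3 - {0})"
  unfolding Y3_def using inj_on_lexp_U3 U3_finite lexp_0 by (auto simp: inj_on_def)

lemma inj_on_lexp_U3_minus_0: "inj_on lexp (U3 - {0})" using inj_on_lexp_U3 by (rule inj_on_subset) auto

lemma infinite_range_lexp: "infinite (range lexp)"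
proof -
  define g where "g n = inverse T ^ Suc n" for n :: nat
  have vg: "v (g n) = inverse (real q) ^ Suc n" for n by (simp only: g_def v_power v_inverse v_T)
  have vg1: "v (g n) < 1" for n
    unfolding vg using q_gt_1 by (intro power_less_one_iff[THEN iffD2]) (auto simp: inverse_less_1_iff)
  have ginj: "inj g"
  proof (rule injI)
    fix m n assume "g m = g n"
    hence "inverse (real q) ^ Suc m = inverse (real q) ^ Suc n" using vg by metis
    hence "real q ^ Suc m = real q ^ Suc n" by (simp add: power_inverse)
    thus "m = n" using q_gt_1 by (simp only: power_inject_exp)
  qed
  have "inj_on lexp (range g)"
  proof (rule inj_onI)
    fix x y assume xy: "x \<in> range g" "y \<in> range g" "lexp x = lexp y"
    show "x = y"
    proof (rule ccontr)
      assume "x \<noteq> y"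
      have "v (x - y) \<le> max (v x) (v y)" by (rule v_diff_le)
      also have "\<dots> < 1" using xy vg1 by auto
      finally have "v (lexp (x - y)) = v (x - y)" by (rule v_lexp_small)
      moreover have "lexp (x - y) = 0" using xy(3) by (simp add: lexp_diff)
      ultimately show False using \<open>x \<noteq> y\<close> by simp
    qed
  qed
  moreover have "infinite (range g)" using ginj by (simp add: finite_image_iff)
  ultimately have "infinite (lexp ` range g)" by (simp add: finite_image_iff)
  thus ?thesis by (meson finite_subset image_mono subset_UNIV)
qed

lemma top_coeff_unique:
  assumes "\<forall>z. lexp (T * z) = T * lexp z + l1 * lexp z ^ q + l2 * lexp z ^ (q ^ 2) + l3 * lexp z ^ (q ^ 3)"
    and "\<forall>z. lexp (T * z) = T * lexp z + m1 * lexp z ^ q + m2 * lexp z ^ (q ^ 2) + m3 * lexp z ^ (q ^ 3)"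
  shows "l3 = m3"
proof -
  define p where "p = monom (l1 - m1) q + monom (l2 - m2) (q ^ 2) + monom (l3 - m3) (q ^ 3)"
  have "poly p (lexp z) = 0" for z
    using assms[THEN spec, of z] by (simp add: p_def poly_monom algebra_simps)
  hence "range lexp \<subseteq> {x. poly p x = 0}" by auto
  have "p = 0"
  proof (rule ccontr)
    assume "p \<noteq> 0"
    hence "finite {x. poly p x = 0}" by (rule poly_roots_finite)
    thus False using \<open>range lexp \<subseteq> {x. poly p x = 0}\<close> infinite_range_lexp finite_subset by blast
  qed
  hence "coeff p (q ^ 3) = 0" by simp
  moreover have "q ^ 1 \<noteq> q ^ 3" "q ^ 2 \<noteq> q ^ 3"
    using power_inject_exp[of q 1 3] power_inject_exp[of q 2 3] q_ge_2 by auto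
  ultimately show ?thesis by (simp add: p_def)
qed

lemma lexp_functional_eq_q_poly:
  obtains a :: "nat \<Rightarrow> 'k" where "\<forall>z. lexp (T * z) = T * lexp z + (T * a 1) * lexp z ^ q + (T * a 2) * lexp z ^ (q ^ 2)
      + (T * a 3) * lexp z ^ (q ^ 3)"
    and "a 3 = (\<Prod>y\<in>Y3-{0}. - 1 / y)"
proof -
  obtain a where a: "\<forall>X. fin_exp Y3 X = (\<Sum>i\<le>3. a i * X ^ (q ^ i))" "a 0 = 1" using Y3_props(3) by blast
  have "finite Y3" "0 \<in> Y3" using Y3_props(1) by (auto simp: finite_add_subgroup_def)
  hence a3: "a 3 = (\<Prod>y\<in>Y3-{0}. - 1 / y)"
    by (rule fin_exp_top_coeff[OF infinite_UNIV_k]) (use Y3_props(2) a(1) card_Fq in auto)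
  have "fin_exp Y3 X = X * (\<Prod>u\<in>U3-{0}. (1 - X / lexp u))" for X
    unfolding fin_exp_def Y3_minus_0 by (simp add: prod.reindex[OF inj_on_lexp_U3_minus_0])
  hence "lexp (T * z) = T * (\<Sum>i\<le>3. a i * lexp z ^ (q ^ i))" for z
    using lexp_functional_eq a(1) by simp
  hence "\<forall>z. lexp (T * z) = T * lexp z + (T * a 1) * lexp z ^ q + (T * a 2) * lexp z ^ (q ^ 2)
      + (T * a 3) * lexp z ^ (q ^ 3)"
    using a(2) by (simp add: numeral_3_eq_3 numeral_2_eq_2 algebra_simps)
  thus ?thesis using that a3 by blast
qed

lemma DeltaT_eq: "DeltaT q T v \<Lambda> = T * (\<Prod>y\<in>Y3-{0}. - 1 / y)"
proof -
  obtain a :: "nat \<Rightarrow> 'k" where fe: "\<forall>z. lexp (T * z) = T * lexp z + (T * a 1) * lexp z ^ q + (T * a 2) * lexp z ^ (q ^ 2)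
      + (T * a 3) * lexp z ^ (q ^ 3)" and a3: "a 3 = (\<Prod>y\<in>Y3-{0}. - 1 / y)"
    by (rule lexp_functional_eq_q_poly)
  have "DeltaT q T v \<Lambda> = T * a 3"
    unfolding DeltaT_def lexp_def[symmetric]
  proof (rule the_equality)
    show "\<exists>l1 l2. \<forall>z. lexp (T * z) = T * lexp z + l1 * lexp z ^ q + l2 * lexp z ^ (q ^ 2) + (T * a 3) * lexp z ^ (q ^ 3)"
      using fe by blast
  next
    fix l3 assume "\<exists>l1 l2. \<forall>z. lexp (T * z) = T * lexp z + l1 * lexp z ^ q + l2 * lexp z ^ (q ^ 2) + l3 * lexp z ^ (q ^ 3)"
    thus "l3 = T * a 3" using top_coeff_unique fe by blast
  qed
  thus ?thesis using a3 by simp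
qed

lemma v_DeltaT: "v (DeltaT q T v \<Lambda>) = real q / (\<Prod>u\<in>U3-{0}. v (lexp u))"
proof -
  have "v (DeltaT q T v \<Lambda>) = real q * (\<Prod>y\<in>Y3-{0}. inverse (v y))"
    unfolding DeltaT_eq by (simp add: v_mult v_T v_prod v_divide inverse_eq_divide)
  also have "(\<Prod>y\<in>Y3-{0}. inverse (v y)) = (\<Prod>u\<in>U3-{0}. inverse (v (lexp u)))"
    unfolding Y3_minus_0 by (simp add: prod.reindex[OF inj_on_lexp_U3_minus_0])
  also have "\<dots> = inverse (\<Prod>u\<in>U3-{0}. v (lexp u))"
    using prod_inversef[of "\<lambda>u. v (lexp u)" "U3 - {0}"] by (simp add: o_def)
  finally show ?thesis by (simp add: divide_inverse)
qed

section \<open>Sizes of the torsion values\<close>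

abbreviation lg :: "real \<Rightarrow> real" where "lg x \<equiv> log (real q) x"

lemma lg_q_power [simp]: "lg (real q ^ k) = real k"
  using q_gt_1 by (simp add: log_nat_power)

lemma lg_q [simp]: "lg (real q) = 1" using q_gt_1 by simp

lemma lg_prod: "(\<And>i. i \<in> I \<Longrightarrow> f i > 0) \<Longrightarrow> lg (\<Prod>i\<in>I. f i) = (\<Sum>i\<in>I. lg (f i))"
proof (induction I rule: infinite_finite_induct)
  case (insert x F)
  have "lg (f x * prod f F) = lg (f x) + lg (prod f F)"
    using insert q_gt_1 by (intro log_mult_pos) (auto intro: prod_pos)
  thus ?case using insert by simp
qed auto

lemma lg_v_lexp:
  assumes "u \<in> U3" "u \<noteq> 0"
  shows "lg (v (lexp u)) = lg (v u) + (\<Sum>l\<in>short_vectors (v u). (lg (v u) - lg (v l)))"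
proof -
  have vu: "v u > 0" using assms v_pos by simp
  have pos: "v l > 0" if "l \<in> short_vectors (v u)" for l using that v_lattice_ge_1 by (force simp: short_vectors_def)
  have "lg (v (lexp u)) = lg (v u) + lg (\<Prod>l\<in>short_vectors (v u). v u / v l)"
    unfolding v_lexp_U3[OF assms(1)] using vu pos q_gt_1 by (intro log_mult_pos) (auto intro!: prod_pos)
  also have "lg (\<Prod>l\<in>short_vectors (v u). v u / v l) = (\<Sum>l\<in>short_vectors (v u). lg (v u / v l))"
    using pos vu by (intro lg_prod) auto
  also have "\<dots> = (\<Sum>l\<in>short_vectors (v u). (lg (v u) - lg (v l)))"
    using pos vu by (intro sum.cong refl log_divide_pos) auto
  finally show ?thesis .
qed

lemma short_vectors_le_1: "rho \<le> 1 \<Longrightarrow> short_vectors rho = {}"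
  using v_lattice_ge_1 by (force simp: short_vectors_def)

lemma q_power_less_iff: "real q ^ k < real q ^ m \<longleftrightarrow> k < m" using q_gt_1 by simp
lemma q_power_le_iff: "real q ^ k \<le> real q ^ m \<longleftrightarrow> k \<le> m" using q_gt_1 by simp

lemma short_vectors_q_power_Suc: "short_vectors (real q ^ Suc m) = ball (real q ^ m) - {0}"
proof -
  have "v l < real q ^ Suc m \<longleftrightarrow> v l \<le> real q ^ m" if l: "l \<in> \<Lambda>" "l \<noteq> 0" for l
  proof -
    obtain k where "v l = real q ^ k" using v_lattice_power[OF l] by blast
    thus ?thesis by (simp only: q_power_less_iff q_power_le_iff) auto
  qed
  thus ?thesis by (auto simp: short_vectors_def ball_def)
qed

text \<open>\<open>lexp_level m\<close> is \<open>log |e(u)|\<close> for any \<open>u \<in> U3\<close> with \<open>|u| = q\<^sup>m\<close>.\<close>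

definition lexp_level :: "nat \<Rightarrow> real" where
  "lexp_level m = real m + (\<Sum>l\<in>short_vectors (real q ^ m). (real m - lg (v l)))"

lemma lexp_level_0: "lexp_level 0 = 0" unfolding lexp_level_def using short_vectors_le_1[of 1] by simp

lemma lexp_level_Suc: "lexp_level (Suc m) = lexp_level m + real (card (ball (real q ^ m)))"
proof -
  have fin: "finite (ball (real q ^ m) - {0})" using finite_ball by simp
  have "(\<Sum>l\<in>short_vectors (real q ^ Suc m). (real (Suc m) - lg (v l)))
      = (\<Sum>l\<in>ball (real q ^ m) - {0}. (1 + (real m - lg (v l))))"
    unfolding short_vectors_q_power_Suc by (intro sum.cong refl) simp
  also have "\<dots> = real (card (ball (real q ^ m) - {0})) + (\<Sum>l\<in>ball (real q ^ m) - {0}. (real m - lg (v l)))"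
    by (simp add: sum.distrib)
  also have "(\<Sum>l\<in>ball (real q ^ m) - {0}. (real m - lg (v l))) = (\<Sum>l\<in>short_vectors (real q ^ m). (real m - lg (v l)))"
  proof (rule sum.mono_neutral_right[OF fin])
    show "short_vectors (real q ^ m) \<subseteq> ball (real q ^ m) - {0}" by (auto simp: short_vectors_def ball_def)
    show "\<forall>l\<in>ball (real q ^ m) - {0} - short_vectors (real q ^ m). real m - lg (v l) = 0"
    proof
      fix l assume "l \<in> ball (real q ^ m) - {0} - short_vectors (real q ^ m)"
      hence "v l = real q ^ m" by (auto simp: short_vectors_def ball_def)
      thus "real m - lg (v l) = 0" by simp
    qed
  qed
  also have "real (card (ball (real q ^ m) - {0})) = real (card (ball (real q ^ m))) - 1"
  proof -
    have "0 \<in> ball (real q ^ m)" using zero_in_lattice by (simp add: ball_def)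
    hence "card (ball (real q ^ m)) > 0" using finite_ball card_gt_0_iff by blast
    thus ?thesis using \<open>0 \<in> ball (real q ^ m)\<close> finite_ball by (simp add: of_nat_diff)
  qed
  finally show ?thesis unfolding lexp_level_def by simp
qed

lemma w1_coord_zero:
  assumes "a1 \<in> A" "a2 \<in> A" "a3 \<in> A" "v (a1 * w1 + a2 * w2 + a3) \<le> real q ^ j" "j < na"
  shows "a1 = 0"
proof (rule ccontr)
  assume "a1 \<noteq> 0"
  hence "v a1 * real q ^ na \<ge> 1 * real q ^ na" using v_A_ge_1[OF assms(1)] by (intro mult_right_mono) auto
  moreover have "v a1 * real q ^ na \<le> real q ^ j" using v_lattice_comb[OF assms(1-3)] assms(4) by simp
  ultimately have "real q ^ na \<le> real q ^ j" by simp
  thus False using assms(5) q_power_le_iff[of na j] by simp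
qed

lemma card_ball_nb_0:
  assumes "nb = 0" "j < na"
  shows "card (ball (real q ^ j)) = q ^ (2 * Suc j)"
proof -
  have eq: "ball (real q ^ j) = (\<lambda>(x, y). x * w2 + y) ` (A_deg_le j \<times> A_deg_le j)"
  proof
    show "ball (real q ^ j) \<subseteq> (\<lambda>(x, y). x * w2 + y) ` (A_deg_le j \<times> A_deg_le j)"
    proof
      fix l assume "l \<in> ball (real q ^ j)"
      then obtain a1 a2 a3 where a: "a1 \<in> A" "a2 \<in> A" "a3 \<in> A" "l = a1 * w1 + a2 * w2 + a3" "v l \<le> real q ^ j"
        unfolding ball_def lattice_iff by blast
      have "a1 = 0" using w1_coord_zero a assms by blast
      moreover have "max (v a1 * real q ^ na) (max (v a2) (v a3)) \<le> real q ^ j"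
        using v_lattice_comb[OF a(1-3)] a assms by simp
      ultimately show "l \<in> (\<lambda>(x, y). x * w2 + y) ` (A_deg_le j \<times> A_deg_le j)" using a by (force simp: A_deg_le_def)
    qed
    show "(\<lambda>(x, y). x * w2 + y) ` (A_deg_le j \<times> A_deg_le j) \<subseteq> ball (real q ^ j)"
    proof clarify
      fix x y assume xy: "x \<in> A_deg_le j" "y \<in> A_deg_le j"
      hence "x * w2 + y = 0 * w1 + x * w2 + y" by simp
      moreover have "v (0 * w1 + x * w2 + y) = max (v x) (v y)"
        using v_lattice_comb[OF zero_in_A, of x y] xy assms by (auto simp: A_deg_le_def q_power_pos max_def)
      ultimately show "x * w2 + y \<in> ball (real q ^ j)" using xy zero_in_A unfolding ball_def lattice_iff A_deg_le_def
        by (metis (mono_tags, lifting) max.bounded_iff mem_Collect_eq)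
    qed
  qed
  have inj: "inj_on (\<lambda>(x, y). x * w2 + y) (A_deg_le j \<times> A_deg_le j)"
  proof (rule inj_onI, clarify)
    fix x y x' y' assume "x \<in> A_deg_le j" "y \<in> A_deg_le j" "x' \<in> A_deg_le j" "y' \<in> A_deg_le j" "x * w2 + y = x' * w2 + y'"
    thus "x = x' \<and> y = y'" using lattice_coords_unique[OF zero_in_A _ _ zero_in_A, of x y x' y'] by (auto simp: A_deg_le_def)
  qed
  show ?thesis unfolding eq using card_image[OF inj] A_deg_le_card
    by (simp add: card_cartesian_product power_add[symmetric] mult_2)
qed

lemma card_ball_below_nb:
  assumes "j < nb"
  shows "card (ball (real q ^ j)) = q ^ Suc j"
proof -
  have "ball (real q ^ j) = A_deg_le j"
  proof
    show "ball (real q ^ j) \<subseteq> A_deg_le j"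
    proof
      fix l assume "l \<in> ball (real q ^ j)"
      then obtain a1 a2 a3 where a: "a1 \<in> A" "a2 \<in> A" "a3 \<in> A" "l = a1 * w1 + a2 * w2 + a3" "v l \<le> real q ^ j"
        unfolding ball_def lattice_iff by blast
      have "a1 = 0" using w1_coord_zero a assms nb_le_na by (meson less_le_trans)
      moreover have "a2 = 0"
      proof (rule ccontr)
        assume "a2 \<noteq> 0"
        hence "v a2 * real q ^ nb \<ge> 1 * real q ^ nb" using v_A_ge_1[OF a(2)] by (intro mult_right_mono) auto
        moreover have "v a2 * real q ^ nb \<le> real q ^ j" using v_lattice_comb[OF a(1-3)] a by simp
        ultimately have "real q ^ nb \<le> real q ^ j" by simp
        thus False using assms q_power_le_iff[of nb j] by simp
      qed
      ultimately show "l \<in> A_deg_le j" using a by (simp add: A_deg_le_def)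
    qed
    show "A_deg_le j \<subseteq> ball (real q ^ j)"
    proof
      fix x assume x: "x \<in> A_deg_le j"
      have "x = 0 * w1 + 0 * w2 + x" by simp
      thus "x \<in> ball (real q ^ j)" using x zero_in_A unfolding ball_def lattice_iff A_deg_le_def by blast
    qed
  qed
  thus ?thesis using A_deg_le_card by simp
qed

lemma geometric_sum_step:
  fixes X K :: real
  assumes "(X - 1) * K = X * (X ^ m - 1)"
  shows "(X - 1) * (K + X ^ Suc m) = X * (X ^ Suc m - 1)"
  using assms by (simp add: algebra_simps)

lemma lexp_level_nb_0:
  "nb = 0 \<Longrightarrow> m \<le> na \<Longrightarrow> (real q ^ 2 - 1) * lexp_level m = real q ^ 2 * ((real q ^ 2) ^ m - 1)"
proof (induction m)
  case (Suc m)
  have card: "real (card (ball (real q ^ m))) = (real q ^ 2) ^ Suc m"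
    unfolding power_mult[symmetric] using card_ball_nb_0[of m] Suc.prems by simp
  show ?case unfolding lexp_level_Suc card using Suc by (intro geometric_sum_step) simp
qed (simp add: lexp_level_0)

lemma lexp_level_below_nb:
  "m \<le> nb \<Longrightarrow> (real q - 1) * lexp_level m = real q * (real q ^ m - 1)"
proof (induction m)
  case (Suc m)
  have card: "real (card (ball (real q ^ m))) = real q ^ Suc m"
    using card_ball_below_nb[of m] Suc.prems by simp
  show ?case unfolding lexp_level_Suc card using Suc by (intro geometric_sum_step) simp
qed (simp add: lexp_level_0)

lemma lg_DeltaT: "lg (v (DeltaT q T v \<Lambda>)) = 1 - (\<Sum>u\<in>U3-{0}. lg (v (lexp u)))"
proof -
  have pos: "v (lexp u) > 0" if "u \<in> U3 - {0}" for u using lexp_U3_nonzero that v_pos by auto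
  have P: "(\<Prod>u\<in>U3-{0}. v (lexp u)) > 0" using pos by (intro prod_pos) auto
  have "lg (v (DeltaT q T v \<Lambda>)) = lg (real q) - lg (\<Prod>u\<in>U3-{0}. v (lexp u))"
    unfolding v_DeltaT using P q_gt_1 by (intro log_divide_pos) auto
  also have "lg (\<Prod>u\<in>U3-{0}. v (lexp u)) = (\<Sum>u\<in>U3-{0}. lg (v (lexp u)))"
    using pos by (intro lg_prod) auto
  finally show ?thesis by simp
qed

lemma lg_v_lexp_q_power:
  assumes "u \<in> U3" "v u = real q ^ k" shows "lg (v (lexp u)) = lexp_level k"
proof -
  have "u \<noteq> 0" using assms q_power_pos[of k] by auto
  thus ?thesis using lg_v_lexp[OF assms(1)] assms(2) by (simp add: lexp_level_def)
qed

lemma lg_v_lexp_small: "u \<in> U3 \<Longrightarrow> u \<noteq> 0 \<Longrightarrow> v u = 1 / real q \<Longrightarrow> lg (v (lexp u)) = -1"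
  using lg_v_lexp[of u] short_vectors_le_1[of "1 / real q"] q_gt_1 by (simp add: log_divide)

lemma lg_DeltaT_two_sizes:
  assumes S: "S \<subseteq> U3" "0 \<in> S"
    and big: "\<And>u. u \<in> U3 - S \<Longrightarrow> v u = real q ^ m"
    and small: "\<And>u. u \<in> S - {0} \<Longrightarrow> v u = 1 / real q"
  shows "lg (v (DeltaT q T v \<Lambda>)) = real (card S) - (real (card U3) - real (card S)) * lexp_level m"
proof -
  have fin: "finite U3" "finite S" using U3_finite finite_subset[OF S(1)] by auto
  have "(\<Sum>u\<in>U3-{0}. lg (v (lexp u))) = (\<Sum>u\<in>(U3 - S) \<union> (S - {0}). lg (v (lexp u)))"
    using S by (intro sum.cong) auto
  also have "\<dots> = (\<Sum>u\<in>U3 - S. lg (v (lexp u))) + (\<Sum>u\<in>S - {0}. lg (v (lexp u)))"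
    by (rule sum.union_disjoint) (use fin in auto)
  also have "(\<Sum>u\<in>U3 - S. lg (v (lexp u))) = (\<Sum>u\<in>U3 - S. lexp_level m)"
    using big lg_v_lexp_q_power by (intro sum.cong) auto
  also have "(\<Sum>u\<in>S - {0}. lg (v (lexp u))) = (\<Sum>u\<in>S - {0}. -1)"
    using small lg_v_lexp_small S by (intro sum.cong) auto
  also have "(\<Sum>u\<in>U3 - S. lexp_level m) + (\<Sum>u\<in>S - {0}. -1)
      = real (card (U3 - S)) * lexp_level m - real (card (S - {0}))" by simp
  also have "real (card (U3 - S)) = real (card U3) - real (card S)"
    using S fin by (simp add: card_Diff_subset of_nat_diff card_mono)
  also have "real (card (S - {0})) = real (card S) - 1"
  proof -
    have "card S > 0" using S fin card_gt_0_iff by blast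
    thus ?thesis using S fin by (simp add: of_nat_diff)
  qed
  finally show ?thesis using lg_DeltaT by simp
qed

lemma torsion_pt_0 [simp]: "torsion_pt 0 0 0 = 0" by (simp add: torsion_pt_def)

lemma v_torsion_pt_top:
  assumes c: "c1 \<in> Fq" "c2 \<in> Fq" "c3 \<in> Fq" and top: "c1 \<noteq> 0 \<or> (c2 \<noteq> 0 \<and> nb = na)"
  shows "v (torsion_pt c1 c2 c3) = real q ^ na / real q"
proof -
  have "v c2 * real q ^ nb \<le> real q ^ nb"
    using v_Fq_le_1[OF c(2)] by (intro mult_left_le_one_le) auto
  hence le: "v c1 * real q ^ na \<le> real q ^ na" "v c2 * real q ^ nb \<le> real q ^ na" "v c3 \<le> real q ^ na"
    using v_Fq_le_1[OF c(1)] v_Fq_le_1[OF c(3)] q_power_nb_le_na q_power_ge_1[of na]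
    by (auto intro: mult_left_le_one_le)
  have "v c1 * real q ^ na = real q ^ na \<or> v c2 * real q ^ nb = real q ^ na"
    using top v_Fq_eq_1 c by auto
  moreover have "max a (max b c) = M" if "a \<le> M" "b \<le> M" "c \<le> M" "a = M \<or> b = M" for a b c M :: real
    using that by (auto simp: max_def)
  ultimately have "max (v c1 * real q ^ na) (max (v c2 * real q ^ nb) (v c3)) = real q ^ na"
    using le by blast
  thus ?thesis using v_torsion_pt[OF c] by simp
qed

lemma v_torsion_pt_bottom:
  assumes c: "c2 \<in> Fq" "c3 \<in> Fq" and "c2 = 0 \<or> nb = 0" and "torsion_pt 0 c2 c3 \<noteq> 0"
  shows "v (torsion_pt 0 c2 c3) = 1 / real q"
proof -
  have "c2 \<noteq> 0 \<or> c3 \<noteq> 0" using assms(4) by auto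
  have "v c2 \<le> 1" "v c3 \<le> 1" "c2 \<noteq> 0 \<Longrightarrow> v c2 = 1" "c3 \<noteq> 0 \<Longrightarrow> v c3 = 1"
    using c v_Fq_le_1 v_Fq_eq_1 by auto
  hence "max (v c2 * real q ^ nb) (v c3) = 1" using assms(3) \<open>c2 \<noteq> 0 \<or> c3 \<noteq> 0\<close>
    by (auto simp: max_def)
  thus ?thesis using v_torsion_pt[OF zero_in_F c] by (simp add: max_def)
qed

lemma lg_DeltaT_equal_sizes:
  assumes "na = 0" "nb = 0" shows "lg (v (DeltaT q T v \<Lambda>)) = real q ^ 3"
proof -
  have "v u = 1 / real q" if u: "u \<in> U3 - {0}" for u
  proof -
    obtain c1 c2 c3 where c: "c1 \<in> Fq" "c2 \<in> Fq" "c3 \<in> Fq" "u = torsion_pt c1 c2 c3"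
      using u U3_cases[of u] by blast
    show ?thesis
    proof (cases "c1 = 0")
      case True thus ?thesis using c that assms v_torsion_pt_bottom[OF c(2,3)] by auto
    qed (use c assms v_torsion_pt_top in simp)
  qed
  thus ?thesis using lg_DeltaT_two_sizes[of U3 0] U3_finite U3_subspace(2) by simp
qed

lemma lg_DeltaT_nb_0:
  assumes "nb = 0" "na = Suc m"
  shows "lg (v (DeltaT q T v \<Lambda>)) = real q ^ 2 - (real q ^ 3 - real q ^ 2) * lexp_level m"
proof -
  define S where "S = (\<lambda>(c2, c3). torsion_pt 0 c2 c3) ` (Fq \<times> Fq)"
  have S: "S \<subseteq> U3" "0 \<in> S"
    using zero_in_F torsion_pt_in_U3 by (auto simp: S_def intro!: image_eqI[where x="(0, 0)"])
  have inj: "inj_on (\<lambda>(c2, c3). torsion_pt 0 c2 c3) (Fq \<times> Fq)"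
    by (rule inj_onI) (use torsion_pt_inj zero_in_F in auto)
  have "card S = q ^ 2" unfolding S_def using card_image[OF inj] card_Fq
    by (simp add: card_cartesian_product power2_eq_square)
  moreover have "v u = real q ^ m" if u: "u \<in> U3 - S" for u
  proof -
    obtain c1 c2 c3 where c: "c1 \<in> Fq" "c2 \<in> Fq" "c3 \<in> Fq" "u = torsion_pt c1 c2 c3"
      using u U3_cases[of u] by blast
    hence "c1 \<noteq> 0" using that by (auto simp: S_def)
    thus ?thesis using v_torsion_pt_top[OF c(1-3)] c assms q_gt_1 by simp
  qed
  moreover have "v u = 1 / real q" if "u \<in> S - {0}" for u
    using that v_torsion_pt_bottom assms by (auto simp: S_def)
  ultimately show ?thesis using lg_DeltaT_two_sizes[OF S] U3_subspace(2) by simp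
qed

lemma lg_DeltaT_nb_na:
  assumes "nb = na" "na = Suc m"
  shows "lg (v (DeltaT q T v \<Lambda>)) = real q - (real q ^ 3 - real q) * lexp_level m"
proof -
  define S where "S = torsion_pt 0 0 ` Fq"
  have S: "S \<subseteq> U3" "0 \<in> S"
    using zero_in_F torsion_pt_in_U3 by (auto simp: S_def intro!: image_eqI[where x=0])
  have inj: "inj_on (torsion_pt 0 0) Fq" by (rule inj_onI) (use torsion_pt_inj zero_in_F in auto)
  have "card S = q" unfolding S_def using card_image[OF inj] card_Fq by simp
  moreover have "v u = real q ^ m" if u: "u \<in> U3 - S" for u
  proof -
    obtain c1 c2 c3 where c: "c1 \<in> Fq" "c2 \<in> Fq" "c3 \<in> Fq" "u = torsion_pt c1 c2 c3"
      using u U3_cases[of u] by blast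
    hence "c1 \<noteq> 0 \<or> c2 \<noteq> 0" using that by (auto simp: S_def)
    thus ?thesis using v_torsion_pt_top[OF c(1-3)] c assms q_gt_1 by auto
  qed
  moreover have "v u = 1 / real q" if "u \<in> S - {0}" for u
    using that v_torsion_pt_bottom zero_in_F by (auto simp: S_def)
  ultimately show ?thesis using lg_DeltaT_two_sizes[OF S] U3_subspace(2) by simp
qed

end

section \<open>The three cases\<close>

lemma DeltaT_formula_a_gt_b:
  fixes Q L :: real
  assumes d: "Q ^ 2 - 1 \<noteq> 0" and L: "(Q ^ 2 - 1) * L = Q ^ 2 * ((Q ^ 2) ^ m - 1)"
  shows "Q ^ 2 - (Q ^ 3 - Q ^ 2) * L
    = Q ^ (2 * Suc m + 3) - (Q ^ 3 - 1) * Q ^ 2 * (Q ^ (2 * Suc m) - 1) / (Q ^ 2 - 1)"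
proof -
  define X where "X = (Q ^ 2) ^ m"
  have X: "Q ^ (2 * Suc m + 3) = Q ^ 5 * X" "Q ^ (2 * Suc m) = Q ^ 2 * X"
    unfolding X_def power_mult[symmetric] by (simp_all add: power_add[symmetric])
  have "(Q ^ 2 - (Q ^ 3 - Q ^ 2) * L) * (Q ^ 2 - 1)
      = Q ^ 2 * (Q ^ 2 - 1) - (Q ^ 3 - Q ^ 2) * ((Q ^ 2 - 1) * L)" by algebra
  also have "\<dots> = Q ^ 5 * X * (Q ^ 2 - 1) - (Q ^ 3 - 1) * Q ^ 2 * (Q ^ 2 * X - 1)"
    unfolding L X_def by algebra
  finally show ?thesis unfolding X using d by (simp add: field_simps)
qed

lemma DeltaT_formula_a_eq_b:
  fixes Q L :: real
  assumes d: "Q - 1 \<noteq> 0" and L: "(Q - 1) * L = Q * (Q ^ m - 1)"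
  shows "Q - (Q ^ 3 - Q) * L = Q ^ 3 - (Q ^ Suc m - 1) * (Q ^ 2 + Q)"
proof -
  have "(Q - (Q ^ 3 - Q) * L) * (Q - 1) = Q * (Q - 1) - (Q ^ 3 - Q) * ((Q - 1) * L)" by algebra
  also have "\<dots> = (Q ^ 3 - (Q ^ Suc m - 1) * (Q ^ 2 + Q)) * (Q - 1)" unfolding L power_Suc by algebra
  finally show ?thesis using d by simp
qed

context orth_lattice
begin

lemma lg_DeltaT_a_gt_b:
  assumes "nb = 0" "na > 0"
  shows "lg (v (DeltaT q T v \<Lambda>))
    = real q ^ (2 * na + 3) - (real q ^ 3 - 1) * real q ^ 2 * (real q ^ (2 * na) - 1) / (real q ^ 2 - 1)"
proof -
  obtain m where m: "na = Suc m" using assms(2) by (cases na) auto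
  have "real q ^ 2 - 1 \<noteq> 0" using one_less_power[OF q_gt_1, of 2] by simp
  thus ?thesis unfolding m lg_DeltaT_nb_0[OF assms(1) m]
    by (rule DeltaT_formula_a_gt_b) (use lexp_level_nb_0 assms m in simp)
qed

lemma lg_DeltaT_a_eq_b:
  assumes "nb = na" "na > 0"
  shows "lg (v (DeltaT q T v \<Lambda>)) = real q ^ 3 - (real q ^ na - 1) * (real q ^ 2 + real q)"
proof -
  obtain m where m: "na = Suc m" using assms(2) by (cases na) auto
  have "real q - 1 \<noteq> 0" using q_gt_1 by simp
  thus ?thesis unfolding m lg_DeltaT_nb_na[OF assms(1) m]
    by (rule DeltaT_formula_a_eq_b) (use lexp_level_below_nb assms m in simp)
qed

end

lemma log_eq_of_int_imp_power:
  fixes B x :: real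
  assumes "B > 1" "x \<ge> 1" "log B x = of_int k"
  shows "k \<ge> 0" "x = B ^ nat k"
proof -
  have "log B x \<ge> 0" using assms(1,2) by simp
  thus k: "k \<ge> 0" using assms(3) by linarith
  have "x = B powr log B x" using assms(1,2) by simp
  also have "\<dots> = B powr real (nat k)" using assms(3) k by simp
  also have "\<dots> = B ^ nat k" using assms(1) by (simp add: powr_realpow)
  finally show "x = B ^ nat k" .
qed

theorem mainTheorem16:
  fixes Fq :: "'k::field set" and q :: nat and T w1 w2 :: 'k and v :: "'k \<Rightarrow> real"
    and a b :: int
  assumes model: "Cinf_model Fq q T v"
    and orth: "orthogonal3 Fq T v w1 w2 1"
    and le12: "v w1 \<ge> v w2" and ge1: "v w2 \<ge> 1"
    and a_def: "logq q v w1 = real_of_int a" and b_def: "logq q v w2 = real_of_int b"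
  shows "(a = 0 \<and> b = 0 \<longrightarrow>
            logq q v (DeltaT q T v (lattice3 Fq T w1 w2)) = real q ^ 3)
       \<and> (a > b \<and> b = 0 \<longrightarrow>
            logq q v (DeltaT q T v (lattice3 Fq T w1 w2)) =
              real q ^ (2 * nat a + 3)
              - (real q ^ 3 - 1) * real q ^ 2 * (real q ^ (2 * nat a) - 1) / (real q ^ 2 - 1))
       \<and> (a = b \<and> b > 0 \<longrightarrow>
            logq q v (DeltaT q T v (lattice3 Fq T w1 w2)) =
              real q ^ 3 - (real q ^ nat a - 1) * (real q ^ 2 + real q))"
proof -
  interpret Cinf_setting v Fq q T by unfold_locales (use model in \<open>auto simp: Cinf_model_def\<close>)
  have a: "a \<ge> 0" "v w1 = real q ^ nat a"
    using log_eq_of_int_imp_power[OF q_gt_1 _ a_def[unfolded logq_def]] le12 ge1 by auto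
  have b: "b \<ge> 0" "v w2 = real q ^ nat b"
    using log_eq_of_int_imp_power[OF q_gt_1 ge1 b_def[unfolded logq_def]] by auto
  have "nat b \<le> nat a" using le12 q_gt_1 unfolding a b by simp
  then interpret orth_lattice v Fq q T w1 w2 "nat a" "nat b"
    by unfold_locales (use orth a b in auto)
  show ?thesis unfolding logq_def
  proof (intro conjI impI)
    assume "a = 0 \<and> b = 0"
    thus "lg (v (DeltaT q T v \<Lambda>)) = real q ^ 3" using lg_DeltaT_equal_sizes by simp
  next
    assume "b < a \<and> b = 0"
    thus "lg (v (DeltaT q T v \<Lambda>)) = real q ^ (2 * nat a + 3)
        - (real q ^ 3 - 1) * real q ^ 2 * (real q ^ (2 * nat a) - 1) / (real q ^ 2 - 1)"
      by (intro lg_DeltaT_a_gt_b) auto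
  next
    assume "a = b \<and> 0 < b"
    thus "lg (v (DeltaT q T v \<Lambda>)) = real q ^ 3 - (real q ^ nat a - 1) * (real q ^ 2 + real q)"
      by (intro lg_DeltaT_a_eq_b) auto
  qed
qed

end
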